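(* Let $\rho$ be a $(0,\infty)$-valued random variable with $\mathbb E\rho=1$, $d_0\ge0$, and $d_{k+1}=\mathbb E\big[\frac{c_k(\mu_k\rho+d_k)}{c_k+(\mu_k\rho+d_k)}\big]$, where $c_k=c^k\bar c_k$, $\mu_k=\mu^k\bar\mu_k$ with $c,\mu\in(0,\infty)$, $\bar c_k\sim L_c(k)k^a$, $\bar\mu_k\sim L_\mu(k)k^b$ ($a,b\in\mathbb R$, $L_c,L_\mu$ slowly varying), and suppose $\bar K=\lim_k\bar K_k\in[0,\infty]$ exists, where $\bar K_k=\bar\mu_k/\bar c_k$. Let $\sigma_k=\sum_{l=0}^{k-1}1/c_l$. Then: (A) if $c<\mu$, or $c=\mu$ and $\bar K=\infty$: $\lim_k d_k/c_k=1/c$; (B) if $c=\mu$ and $\bar K\in(0,\infty)$: $\lim_kd_k/c_k=\bar M/c$ with $\bar M\in(0,1)$ the unique solution of $\bar M=\mathbb E\big[\frac{c\bar K\rho+\bar M}{c+(c\bar K\rho+\bar M)}\big]$; (C1) if $c=\mu<1$ and $\bar K=0$: $\lim_kd_k/c_k=(1-c)/c$; (C2) if $c=\mu>1$, $\bar K=0$ and $\sum_k\bar K_k=\infty$: $\lim_kd_k/\mu_k=1/(\mu-1)$; (C3) if $1>c>\mu$ and $\bar K=0$, or $1=c>\mu$, $\bar K=0$ and $a<1$: $\lim_k\sigma_kd_k=1$. *)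

theory Defs
  imports "HOL-Probability.Probability" "HOL-Library.Landau_Symbols"
begin

definition slowly_varying :: "(real \<Rightarrow> real) \<Rightarrow> bool" where
  "slowly_varying L \<longleftrightarrow>
     L \<in> borel_measurable borel \<and> (\<forall>x>0. L x > 0) \<and>
     (\<forall>t>0. ((\<lambda>x. L (t * x) / L x) \<longlongrightarrow> 1) at_top)"

end

theory Submission
  imports Defs
begin

text \<open>Write \<open>C\<^sub>k = c\<^sup>k cbar\<^sub>k\<close> and \<open>U\<^sub>k = \<mu>\<^sup>k \<mu>bar\<^sub>k\<close>; regular variation of \<open>cbar\<close> and \<open>\<mu>bar\<close> gives \<open>C\<^sub>k\<^sub>+\<^sub>1/C\<^sub>k \<rightarrow> c\<close> and \<open>U\<^sub>k\<^sub>+\<^sub>1/U\<^sub>k \<rightarrow> \<mu>\<close>.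
  With \<open>\<phi>(q, D) = E[(q\<rho> + D)/(1 + q\<rho> + D)]\<close> the normalised sequence \<open>D\<^sub>k = d\<^sub>k/C\<^sub>k\<close> satisfies
  \<open>D\<^sub>k\<^sub>+\<^sub>1 = (C\<^sub>k/C\<^sub>k\<^sub>+\<^sub>1) \<phi>(U\<^sub>k/C\<^sub>k, D\<^sub>k)\<close>. In the regimes (A), (B), (C1) the ratio \<open>U\<^sub>k/C\<^sub>k\<close> tends
  to \<open>\<infinity>\<close>, \<open>K\<close> or \<open>0\<close>, so \<open>D\<^sub>k\<close> asymptotically follows \<open>D \<mapsto> \<phi>(K, D)/c\<close>. As \<open>\<phi>(K, \<cdot>)\<close> is
  monotone and 1-Lipschitz, \<open>limsup D\<^sub>k\<close> is a subsolution and \<open>liminf D\<^sub>k\<close> a supersolution of the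
  fixed point equation, and concavity of \<open>\<phi>(K, \<cdot>)\<close> makes its positive solution unique.
  In (C2) the same squeeze is applied to \<open>d\<^sub>k/U\<^sub>k\<close>, whose recursion is asymptotically
  \<open>E \<mapsto> (1 + E)/\<mu>\<close>. In (C3) \<open>d\<^sub>k \<rightarrow> 0\<close> and
  \<open>1/d\<^sub>k\<^sub>+\<^sub>1 = 1/d\<^sub>k + 1/C\<^sub>k + O(U\<^sub>k (1/d\<^sub>k + 1/C\<^sub>k)\<^sup>2)\<close>; the quadratic errors are negligible
  against \<open>\<sigma>\<^sub>k\<close> by Stolz-Cesaro, whence \<open>1/d\<^sub>k \<sim> \<sigma>\<^sub>k\<close>.\<close>

section \<open>Slowly and regularly varying functions\<close>

lemma lborel_Int_nonempty_if_emeasure_sum_gt: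
  fixes A B S :: "real set"
  assumes sets: "A \<in> sets lborel" "B \<in> sets lborel" "S \<in> sets lborel"
    and sub: "A \<subseteq> S" "B \<subseteq> S"
    and gt: "emeasure lborel S < emeasure lborel A + emeasure lborel B"
  shows "A \<inter> B \<noteq> {}"
proof
  assume "A \<inter> B = {}"
  then have "emeasure lborel A + emeasure lborel B = emeasure lborel (A \<union> B)"
    using sets by (intro plus_emeasure) auto
  also have "\<dots> \<le> emeasure lborel S"
    using sets sub by (intro emeasure_mono) auto
  finally show False using gt by simp
qed

text \<open>Karamata's uniform convergence theorem in additive form. Instead of Baire category we use
  Lebesgue measure: if the claim fails along \<open>x\<^sub>n\<close> with bad increments \<open>y\<^sub>n \<in> [0, 1]\<close>, the sets
  of \<open>v \<in> [0, 2]\<close> with small increments from \<open>x\<^sub>n\<close> and from \<open>x\<^sub>n + y\<^sub>n\<close> eventually have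
  measure \<open>> 3/2\<close>; after shifting the second by \<open>y\<^sub>n\<close> both lie in \<open>[0, 3]\<close>, so they meet, and the
  triangle inequality contradicts the choice of \<open>y\<^sub>n\<close>.\<close>
lemma uniform_convergence_additive:
  fixes h :: "real \<Rightarrow> real" and e :: real
  assumes hm[measurable]: "h \<in> borel_measurable borel"
    and lim: "\<And>v. ((\<lambda>u. h (u+v) - h u) \<longlongrightarrow> 0) at_top"
    and e: "e > 0"
  shows "\<exists>U. \<forall>u\<ge>U. \<forall>v\<in>{0..1}. \<bar>h (u+v) - h u\<bar> < e"
proof (rule ccontr)
  assume "\<not> ?thesis"
  then have "\<forall>n::nat. \<exists>u\<ge>real n. \<exists>v\<in>{0..1}. \<bar>h (u+v) - h u\<bar> \<ge> e"
    by (simp add: not_less)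
  then obtain x y where xy: "\<And>n. x n \<ge> real n" "\<And>n. y n \<in> {0..1}"
     "\<And>n. \<bar>h (x n + y n) - h (x n)\<bar> \<ge> e"
    by metis
  define G where "G z n = {v\<in>{0..2}. \<forall>m\<ge>n. \<bar>h (z m + v) - h (z m)\<bar> < e/2}"
    for z :: "nat \<Rightarrow> real" and n
  have G_sets: "G z n \<in> sets lborel" for z n unfolding G_def by measurable
  have G_large: "eventually (\<lambda>n. ennreal (3/2) < emeasure lborel (G z n)) sequentially"
    if z: "filterlim z at_top sequentially" for z
  proof -
    have "\<exists>n. v \<in> G z n" if v: "v \<in> {0..2}" for v
    proof -
      have "((\<lambda>m. h (z m + v) - h (z m)) \<longlongrightarrow> 0) sequentially"
        using filterlim_compose[OF lim z] by simp
      from order_tendstoD(2)[OF tendsto_rabs[OF this], of "e/2"]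
      have "eventually (\<lambda>m. \<bar>h (z m + v) - h (z m)\<bar> < e/2) sequentially"
        using e by simp
      then obtain n where "\<forall>m\<ge>n. \<bar>h (z m + v) - h (z m)\<bar> < e/2"
        unfolding eventually_sequentially by blast
      then show ?thesis using v unfolding G_def by blast
    qed
    then have "(\<Union>n. G z n) = {0..2}" unfolding G_def by auto
    moreover have "incseq (G z)" unfolding G_def incseq_def by auto
    ultimately have "(\<lambda>n. emeasure lborel (G z n)) \<longlonglongrightarrow> 2"
      using Lim_emeasure_incseq[of "G z" lborel] G_sets by auto
    moreover have "ennreal (3/2) < 2" by (simp add: ennreal_less_iff)
    ultimately show ?thesis by (rule order_tendstoD(1))
  qed
  have x_lim: "filterlim x at_top sequentially"
    by (rule filterlim_at_top_mono[OF filterlim_real_sequentially]) (use xy in auto)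
  have xy_lim: "filterlim (\<lambda>n. x n + y n) at_top sequentially"
  proof (rule filterlim_at_top_mono[OF filterlim_real_sequentially always_eventually], rule allI)
    fix n show "real n \<le> x n + y n" using xy(1)[of n] xy(2)[of n] by auto
  qed
  from eventually_conj[OF G_large[OF x_lim] G_large[OF xy_lim]] obtain n where n: "ennreal (3/2) < emeasure lborel (G x n)"
    "ennreal (3/2) < emeasure lborel (G (\<lambda>n. x n + y n) n)"
    unfolding eventually_sequentially by blast
  define T where "T = (+) (- y n) -` G (\<lambda>n. x n + y n) n"
  have T_sets: "T \<in> sets lborel"
    unfolding T_def using measurable_sets[of "(+) (- y n)" lborel borel] G_sets by simp
  have "emeasure lborel T = emeasure (distr lborel borel ((+) (- y n))) (G (\<lambda>n. x n + y n) n)"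
    unfolding T_def using G_sets by (subst emeasure_distr) auto
  then have T_measure: "emeasure lborel T = emeasure lborel (G (\<lambda>n. x n + y n) n)"
    by (simp add: lborel_distr_plus)
  have "emeasure lborel {0..3::real} = ennreal (3/2) + ennreal (3/2)"
    by (simp flip: ennreal_plus)
  also have "\<dots> < emeasure lborel (G x n) + emeasure lborel T"
    using n T_measure by (intro add_strict_mono) auto
  finally have "emeasure lborel {0..3::real} < emeasure lborel (G x n) + emeasure lborel T" .
  moreover have "G x n \<subseteq> {0..3}" "T \<subseteq> {0..3}" unfolding G_def T_def using xy(2)[of n] by auto
  ultimately have "G x n \<inter> T \<noteq> {}"
    by (intro lborel_Int_nonempty_if_emeasure_sum_gt[OF G_sets T_sets]) auto
  then obtain v where v: "v \<in> G x n" "v \<in> T" by blast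
  have "\<bar>h (x n + v) - h (x n)\<bar> < e/2" using v(1) unfolding G_def by auto
  moreover have "\<bar>h ((x n + y n) + (v - y n)) - h (x n + y n)\<bar> < e/2"
    using v(2) unfolding T_def G_def by auto
  ultimately have "\<bar>h (x n + y n) - h (x n)\<bar> < e" by simp (smt (verit))
  with xy(3)[of n] show False by simp
qed

lemma slowly_varying_pos: "slowly_varying L \<Longrightarrow> x > 0 \<Longrightarrow> L x > 0"
  unfolding slowly_varying_def by auto

lemma slowly_varying_log_exp:
  assumes sv: "slowly_varying L"
  shows "(\<lambda>u. ln (L (exp u))) \<in> borel_measurable borel"
    and "((\<lambda>u. ln (L (exp (u+v))) - ln (L (exp u))) \<longlongrightarrow> 0) at_top"
proof -
  note Lp = slowly_varying_pos[OF sv]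
  have Lm[measurable]: "L \<in> borel_measurable borel"
    and Ll: "\<And>t. t > 0 \<Longrightarrow> ((\<lambda>x. L (t * x) / L x) \<longlongrightarrow> 1) at_top"
    using sv unfolding slowly_varying_def by auto
  show "(\<lambda>u. ln (L (exp u))) \<in> borel_measurable borel" by measurable
  have "((\<lambda>u. L (exp v * exp u) / L (exp u)) \<longlongrightarrow> 1) at_top"
    using filterlim_compose[OF Ll[of "exp v"] exp_at_top] by simp
  then have "((\<lambda>u. ln (L (exp v * exp u) / L (exp u))) \<longlongrightarrow> ln 1) at_top"
    by (rule tendsto_ln) simp
  moreover have "ln (L (exp v * exp u) / L (exp u)) = ln (L (exp (u+v))) - ln (L (exp u))" for u
    using Lp[of "exp u"] Lp[of "exp v * exp u"] by (simp add: ln_div exp_add mult.commute)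
  ultimately show "((\<lambda>u. ln (L (exp (u+v))) - ln (L (exp u))) \<longlongrightarrow> 0) at_top" by simp
qed

lemma slowly_varying_uniform:
  assumes sv: "slowly_varying L" and e: "e > 0"
  shows "\<exists>U. \<forall>u\<ge>U. \<forall>v\<in>{0..1}. \<bar>ln (L (exp (u+v))) - ln (L (exp u))\<bar> < e"
  using uniform_convergence_additive[of "\<lambda>u. ln (L (exp u))", OF slowly_varying_log_exp(1)[OF sv] slowly_varying_log_exp(2)[OF sv] e] by simp

lemma slowly_varying_Suc_ratio:
  assumes sv: "slowly_varying L"
  shows "(\<lambda>k. L (real (Suc k)) / L (real k)) \<longlonglongrightarrow> 1"
proof -
  note Lp = slowly_varying_pos[OF sv]
  have "(\<lambda>k. ln (L (real (Suc k))) - ln (L (real k))) \<longlonglongrightarrow> 0"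
  proof (rule LIMSEQ_I)
    fix r :: real assume r: "r > 0"
    obtain U where U: "\<forall>u\<ge>U. \<forall>v\<in>{0..1}. \<bar>ln (L (exp (u+v))) - ln (L (exp u))\<bar> < r"
      using slowly_varying_uniform[OF sv r] by blast
    obtain N :: nat where N: "N \<ge> 1" "real N \<ge> exp U"
      by (meson le_cases order.trans real_arch_simple real_of_nat_ge_one_iff)
    show "\<exists>no. \<forall>n\<ge>no. norm (ln (L (real (Suc n))) - ln (L (real n)) - 0) < r"
    proof (intro exI allI impI)
      fix n assume n: "N \<le> n"
      have npos: "real n > 0" using n N by simp
      have u: "ln (real n) \<ge> U" using n N npos
        by (metis exp_le_cancel_iff exp_ln order.trans of_nat_le_iff)
      define v where "v = ln (real (Suc n) / real n)"
      have v0: "v \<ge> 0" unfolding v_def using npos by simp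
      have "real (Suc n) / real n \<le> 2" using npos n N by (simp add: field_simps)
      also have "2 \<le> exp (1::real)" using exp_ge_add_one_self[of 1] by simp
      finally have v1: "v \<le> 1" unfolding v_def using npos
        by (metis divide_pos_pos ln_exp ln_le_cancel_iff of_nat_0_less_iff zero_less_Suc exp_gt_zero)
      have "exp (ln (real n) + v) = real (Suc n)" unfolding v_def using npos
        by (simp add: exp_add)
      then show "norm (ln (L (real (Suc n))) - ln (L (real n)) - 0) < r"
        using U u v0 v1 npos by (metis atLeastAtMost_iff exp_ln real_norm_def diff_zero)
    qed
  qed
  then have "(\<lambda>k. exp (ln (L (real (Suc k))) - ln (L (real k)))) \<longlonglongrightarrow> exp 0"
    by (rule tendsto_exp)
  moreover have "eventually (\<lambda>k. exp (ln (L (real (Suc k))) - ln (L (real k))) = L (real (Suc k)) / L (real k)) sequentially"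
    using eventually_gt_at_top[of 0]
    by eventually_elim (use Lp in \<open>simp add: exp_diff\<close>)
  ultimately show ?thesis by (simp add: tendsto_cong)
qed

lemma slowly_varying_powr_bound:
  assumes sv: "slowly_varying L" and d: "\<delta> > 0"
  shows "\<exists>B X. X > 0 \<and> (\<forall>x\<ge>X. L x \<le> B * x powr \<delta>)"
proof -
  define h where "h u = ln (L (exp u))" for u
  note Lp = slowly_varying_pos[OF sv]
  obtain U where U: "\<forall>u\<ge>U. \<forall>v\<in>{0..1}. \<bar>h (u+v) - h u\<bar> < \<delta>"
    using slowly_varying_uniform[OF sv d] unfolding h_def by blast
  have ind: "\<forall>u. U \<le> u \<longrightarrow> u \<le> U + real n \<longrightarrow> h u \<le> h U + \<delta> * real n" for n
  proof (induction n)
    case 0 then show ?case by auto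
  next
    case (Suc n)
    show ?case
    proof (intro allI impI)
      fix u assume u: "U \<le> u" "u \<le> U + real (Suc n)"
      show "h u \<le> h U + \<delta> * real (Suc n)"
      proof (cases "u \<le> U + real n")
        case True then show ?thesis using Suc u d by (smt (verit) mult_left_mono of_nat_Suc)
      next
        case False
        have "\<bar>h ((U + real n) + (u - (U + real n))) - h (U + real n)\<bar> < \<delta>"
          using U[rule_format, of "U + real n" "u - (U + real n)"] False u by auto
        moreover have "h (U + real n) \<le> h U + \<delta> * real n" using Suc by auto
        ultimately show ?thesis by (simp add: algebra_simps)
      qed
    qed
  qed
  have hb: "h u \<le> h U + \<delta> * (u - U + 1)" if "u \<ge> U" for u
  proof -
    define n where "n = nat \<lceil>u - U\<rceil>"
    have "u \<le> U + real n" "real n \<le> u - U + 1" unfolding n_def using that by linarith+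
    then show ?thesis using ind[of n] that d by (smt (verit) mult_left_mono)
  qed
  show ?thesis
  proof (intro exI conjI allI impI)
    show "exp U > 0" by simp
    fix x assume x: "exp U \<le> x"
    have xp: "x > 0" using x by (smt (verit) exp_gt_zero)
    have "L x = exp (h (ln x))" unfolding h_def using xp Lp[OF xp] by simp
    also have "\<dots> \<le> exp (h U + \<delta> * (ln x - U + 1))"
      using hb[of "ln x"] x xp by (simp add: ln_ge_iff)
    also have "\<dots> = exp (h U + \<delta> * (1 - U)) * x powr \<delta>"
      using xp by (simp add: powr_def exp_add[symmetric] algebra_simps)
    finally show "L x \<le> exp (h U + \<delta> * (1 - U)) * x powr \<delta>" .
  qed
qed

lemma regularly_varying_Suc_ratio:
  fixes cb :: "nat \<Rightarrow> real"
  assumes sv: "slowly_varying L" and pos: "\<forall>k. cb k > 0"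
    and eq: "cb \<sim>[sequentially] (\<lambda>k. L (real k) * real k powr a)"
  shows "(\<lambda>k. cb (Suc k) / cb k) \<longlonglongrightarrow> 1"
proof -
  define g where "g k = L (real k) * real k powr a" for k
  note Lp = slowly_varying_pos[OF sv]
  have gp: "g k > 0" if "k > 0" for k unfolding g_def using Lp[of "real k"] that by simp
  have q: "(\<lambda>k. cb k / g k) \<longlonglongrightarrow> 1"
    using asymp_equivD[OF eq] pos unfolding g_def by (simp add: less_imp_neq[symmetric])
  have q1: "(\<lambda>k. cb (Suc k) / g (Suc k)) \<longlonglongrightarrow> 1" using q by (rule LIMSEQ_Suc)
  have q2: "(\<lambda>k. g k / cb k) \<longlonglongrightarrow> 1" using tendsto_inverse[OF q] by (simp add: inverse_eq_divide)
  have "(\<lambda>k. 1 + 1 / real k) \<longlonglongrightarrow> 1 + 0"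
    by (intro tendsto_add tendsto_const lim_const_over_n)
  then have pw: "(\<lambda>k. (1 + 1 / real k) powr a) \<longlonglongrightarrow> 1 powr a"
    by (intro tendsto_powr) simp_all
  have gr: "(\<lambda>k. L (real (Suc k)) / L (real k) * (1 + 1 / real k) powr a) \<longlonglongrightarrow> 1 * 1"
    using tendsto_mult[OF slowly_varying_Suc_ratio[OF sv] pw] by simp
  have "(\<lambda>k. cb (Suc k) / g (Suc k) * (L (real (Suc k)) / L (real k) * (1 + 1 / real k) powr a) * (g k / cb k)) \<longlonglongrightarrow> 1 * (1 * 1) * 1"
    by (intro tendsto_mult q1 gr q2)
  moreover have "eventually (\<lambda>k. cb (Suc k) / g (Suc k) * (L (real (Suc k)) / L (real k) * (1 + 1 / real k) powr a) * (g k / cb k) = cb (Suc k) / cb k) sequentially"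
    using eventually_gt_at_top[of 0]
  proof eventually_elim
    case (elim k)
    have kp: "real k > 0" using elim by simp
    have "(1 + 1 / real k) powr a = real (Suc k) powr a / real k powr a"
      using kp by (simp add: powr_divide[symmetric] field_simps)
    then show ?case using gp[of k] gp[of "Suc k"] elim pos Lp[OF kp] kp Lp[of "1 + real k"]
      unfolding g_def by (simp add: field_simps)
  qed
  ultimately show ?thesis by (simp add: tendsto_cong)
qed

lemma geometric_times_Suc_ratio:
  fixes x :: "nat \<Rightarrow> real"
  assumes "\<forall>k. x k > 0" and "(\<lambda>k. x (Suc k) / x k) \<longlonglongrightarrow> 1"
  shows "(\<lambda>k. r ^ Suc k * x (Suc k) / (r ^ k * x k)) \<longlonglongrightarrow> r"
proof -
  have "r ^ Suc k * x (Suc k) / (r ^ k * x k) = r * (x (Suc k) / x k)" for k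
    using assms(1) by (cases "r = 0") auto
  then show ?thesis using tendsto_mult[OF tendsto_const assms(2), of r] by simp
qed

lemma regularly_varying_inverse_not_summable:
  fixes cb :: "nat \<Rightarrow> real"
  assumes sv: "slowly_varying L" and pos: "\<forall>k. cb k > 0"
    and eq: "cb \<sim>[sequentially] (\<lambda>k. L (real k) * real k powr a)" and a: "a < 1"
  shows "\<not> summable (\<lambda>k. 1 / cb k)"
proof
  assume sm: "summable (\<lambda>k. 1 / cb k)"
  note Lp = slowly_varying_pos[OF sv]
  have q: "(\<lambda>k. cb k / (L (real k) * real k powr a)) \<longlonglongrightarrow> 1"
    using asymp_equivD[OF eq] pos by (simp add: less_imp_neq[symmetric])
  obtain N1 where N1: "\<forall>k\<ge>N1. cb k / (L (real k) * real k powr a) < 2"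
    using order_tendstoD(2)[OF q, of 2] by (auto simp: eventually_sequentially)
  obtain Bp X where BX: "X > 0" "\<forall>x\<ge>X. L x \<le> Bp * x powr (1 - a)"
    using slowly_varying_powr_bound[OF sv, of "1 - a"] a by auto
  have Bp: "Bp > 0"
  proof -
    have "0 < L X" using Lp BX by simp
    also have "\<dots> \<le> Bp * X powr (1 - a)" using BX by simp
    finally show ?thesis using BX by (simp add: zero_less_mult_iff)
  qed
  obtain N2 :: nat where N2: "real N2 \<ge> X" by (meson real_arch_simple)
  have ev: "eventually (\<lambda>k. norm (inverse (real k)) \<le> 2 * Bp * (1 / cb k)) sequentially"
    unfolding eventually_sequentially
  proof (intro exI allI impI)
    fix k assume k: "max (max N1 N2) 1 \<le> k"
    have kp: "real k > 0" using k by simp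
    have kX: "real k \<ge> X" using k N2 by simp
    have g: "L (real k) * real k powr a > 0" using Lp[OF kp] kp by simp
    have "cb k < 2 * (L (real k) * real k powr a)" using N1 k g by (simp add: divide_less_eq)
    also have "\<dots> \<le> 2 * (Bp * real k powr (1 - a) * real k powr a)"
      using BX(2)[rule_format, OF kX] kp by (intro mult_left_mono mult_right_mono) auto
    also have "\<dots> = 2 * Bp * real k"
      using kp by (simp add: powr_add[symmetric] mult.assoc)
    finally have "cb k < 2 * Bp * real k" .
    then have "1 / (2 * Bp * real k) \<le> 1 / cb k" using pos Bp kp by (intro divide_left_mono) (auto intro: less_imp_le)
    then have "2 * Bp * (1 / (2 * Bp * real k)) \<le> 2 * Bp * (1 / cb k)" using Bp by (intro mult_left_mono) auto
    moreover have "norm (inverse (real k)) = 2 * Bp * (1 / (2 * Bp * real k))" using Bp kp by (simp add: inverse_eq_divide)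
    ultimately show "norm (inverse (real k)) \<le> 2 * Bp * (1 / cb k)" by simp
  qed
  have "summable (\<lambda>k. 2 * Bp * (1 / cb k))" using sm by (rule summable_mult)
  then have "summable (\<lambda>k. inverse (real k))" by (rule summable_comparison_test_ev[OF ev])
  then show False using not_summable_harmonic by blast
qed

section \<open>Elementary inequalities\<close>

lemma frac_one_plus_increment_le:
  fixes z z' :: real assumes "0 \<le> z" "z \<le> z'"
  shows "z' / (1 + z') - z / (1 + z) \<le> z' - z"
proof -
  have "z' / (1 + z') - z / (1 + z) = (z' - z) / ((1 + z') * (1 + z))"
    using assms by (simp add: field_simps)
  also have "\<dots> \<le> z' - z"
  proof (rule divide_left_mono[where b = 1, simplified])
    show "1 \<le> (1 + z') * (1 + z)" using assms mult_mono[of 1 "1 + z'" 1 "1 + z"] by simp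
  qed (use assms in auto)
  finally show ?thesis .
qed

lemma frac_one_plus_mono: "0 \<le> (z::real) \<Longrightarrow> z \<le> z' \<Longrightarrow> z / (1 + z) \<le> z' / (1 + z')"
  by (simp add: divide_simps) (simp add: algebra_simps)

text \<open>Concavity of \<open>z \<mapsto> z / (1 + z)\<close>; the defect is
  \<open>t (t - 1) x\<^sup>2 / ((1 + y) (1 + y + x) (1 + y + t x))\<close>.\<close>
lemma frac_one_plus_concave:
  fixes y x t :: real
  assumes "y \<ge> 0" "x \<ge> 0" "t \<ge> 1"
  shows "(y + t*x) / (1 + (y + t*x)) + (t - 1) * (y / (1 + y)) \<le> t * ((y + x) / (1 + (y + x)))"
proof -
  define A B C where "A = 1 + y" and "B = 1 + (y + x)" and "C = 1 + (y + t*x)"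
  have pos: "A > 0" "B > 0" "C > 0"
    using assms mult_nonneg_nonneg[of t x] unfolding A_def B_def C_def by linarith+
  have frac: "z / (1 + z) = 1 - 1 / (1 + z)" if "1 + z \<noteq> 0" for z :: real
    using that by (simp add: field_simps)
  have "t * ((y + x) / (1 + (y + x))) - ((y + t*x) / (1 + (y + t*x)) + (t - 1) * (y / (1 + y)))
     = t * (1 - 1 / B) - ((1 - 1 / C) + (t - 1) * (1 - 1 / A))"
    using frac[of "y + x"] frac[of "y + t*x"] frac[of y] pos unfolding A_def B_def C_def by simp
  also have "\<dots> = (- (t * A * C) + A * B + (t - 1) * B * C) / (A * B * C)"
    using pos by (simp add: field_simps)
  also have "- (t * A * C) + A * B + (t - 1) * B * C = t * (t - 1) * x^2"
    unfolding A_def B_def C_def by (simp add: algebra_simps power2_eq_square)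
  also have "t * (t - 1) * x^2 / (A * B * C) \<ge> 0"
    using assms pos by simp
  finally show ?thesis by simp
qed

lemma rescale_frac_one_plus:
  fixes a z :: real assumes "a > 0" "z \<ge> 0"
  shows "a * ((z / a) / (1 + z / a)) = a * z / (a + z)"
proof -
  have "1 + z / a = (a + z) / a" using assms by (simp add: field_simps)
  then show ?thesis using assms by simp
qed

lemma rescale_frac_one_plus_weighted:
  fixes a b z :: real assumes "a > 0" "b > 0" "z \<ge> 0"
  shows "b * ((z / b) / (1 + b / a * (z / b))) = a * z / (a + z)"
proof -
  have "b / a * (z / b) = z / a" using assms by simp
  moreover have "1 + z / a = (a + z) / a" using assms by (simp add: field_simps)
  ultimately show ?thesis using assms by simp
qed

lemma parallel_frac_bounds:
  fixes a z :: real assumes "a > 0" "z \<ge> 0"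
  shows "a * z / (a + z) \<le> a" "0 \<le> a * z / (a + z)"
proof -
  have p: "a + z > 0" using assms by simp
  have "a * z \<le> a * (a + z)" using assms by (intro mult_left_mono) auto
  then show "a * z / (a + z) \<le> a" using p by (simp add: pos_divide_le_eq)
  show "0 \<le> a * z / (a + z)" using assms p by simp
qed

lemma frac_square_bounds:
  fixes K w :: real assumes "K \<ge> 0" "w \<ge> 0"
  shows "K * w^2 / (1 + K * w) \<le> w" "0 \<le> K * w^2 / (1 + K * w)"
proof -
  have p: "1 + K * w > 0" using assms by (simp add: add_pos_nonneg)
  show "K * w^2 / (1 + K * w) \<le> w" using p assms
    by (simp add: divide_simps power2_eq_square algebra_simps)
  show "0 \<le> K * w^2 / (1 + K * w)" using p assms by simp
qed

lemma norm_frac_square_le: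
  fixes K w :: real assumes "K \<ge> 0" "w \<ge> 0"
  shows "norm (K * w^2 / (1 + K * w)) \<le> w"
proof -
  have "norm (K * w^2 / (1 + K * w)) = K * w^2 / (1 + K * w)"
    unfolding real_norm_def by (rule abs_of_nonneg[OF frac_square_bounds(2)[OF assms]])
  then show ?thesis using frac_square_bounds(1)[OF assms] by simp
qed

lemma frac_one_plus_lower_bound:
  fixes K z w :: real assumes "K \<ge> 0" "0 \<le> z" "z \<le> w"
  shows "z - K * w^2 / (1 + K * w) \<le> z / (1 + K * z)"
proof -
  have p: "1 + K * w > 0" "1 + K * z > 0" using assms by (auto simp: add_pos_nonneg)
  have "z - z / (1 + K * z) = K * z^2 / (1 + K * z)" using p by (simp add: field_simps power2_eq_square)
  also have "\<dots> \<le> K * w^2 / (1 + K * w)"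
  proof -
    have "K * z^2 * (1 + K * w) \<le> K * w^2 * (1 + K * z)"
    proof -
      have "z^2 \<le> w^2" using assms by (intro power_mono) auto
      moreover have "z^2 * w \<le> w^2 * z"
      proof -
        have "(z * w) * z \<le> (z * w) * w" using assms by (intro mult_left_mono) auto
        then show ?thesis by (simp add: power2_eq_square algebra_simps)
      qed
      ultimately have "z^2 + K * (z^2 * w) \<le> w^2 + K * (w^2 * z)"
        using assms by (intro add_mono mult_left_mono) auto
      then have "K * (z^2 + K * (z^2 * w)) \<le> K * (w^2 + K * (w^2 * z))"
        using assms by (intro mult_left_mono) auto
      then show ?thesis by (simp add: algebra_simps)
    qed
    then show ?thesis using p by (simp add: divide_simps)
  qed
  finally show ?thesis by simp
qed

lemma inverse_parallel_le:
  fixes a x y :: real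
  assumes "a > 0" "x > 0" "a * x / (a + x) \<le> y"
  shows "1 / y \<le> 1 / x + 1 / a"
proof -
  have f: "a * x / (a + x) > 0" using assms by simp
  have e: "y > 0" using f assms by linarith
  have "1 / y \<le> 1 / (a * x / (a + x))" using assms f e by (intro divide_left_mono) (auto intro: mult_pos_pos)
  also have "\<dots> = 1 / x + 1 / a" using assms by (simp add: field_simps)
  finally show ?thesis .
qed

lemma inverse_parallel_perturbed_ge:
  fixes a u x y :: real
  assumes "a > 0" "x > 0" "u \<ge> 0" "y \<le> a * x / (a + x) + u" "y > 0"
  shows "(1 / x + 1 / a) - u * (1 / x + 1 / a)^2 \<le> 1 / y"
proof -
  define w where "w = 1 / x + 1 / a"
  have w: "w > 0" unfolding w_def using assms by (intro add_pos_pos) auto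
  have f: "a * x / (a + x) = 1 / w" unfolding w_def using assms by (simp add: field_simps)
  have p: "1 / w + u > 0" using w assms by (simp add: add_pos_nonneg)
  have "1 / (1 / w + u) \<le> 1 / y" using assms f p by (intro divide_left_mono) auto
  moreover have "1 / (1 / w + u) = w / (1 + u * w)" using w by (simp add: field_simps)
  moreover have "w - u * w^2 \<le> w / (1 + u * w)"
  proof -
    have q: "1 + u * w > 0" using w assms by (simp add: add_pos_nonneg)
    have "(w - u * w^2) * (1 + u * w) = w - u^2 * w^3"
      by (simp add: algebra_simps power2_eq_square power3_eq_cube)
    also have "\<dots> \<le> w" using w assms by simp
    finally show ?thesis using q by (simp add: pos_le_divide_eq)
  qed
  ultimately show ?thesis unfolding w_def by simp
qed

lemma le_frac_one_plus_div_iff: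
  fixes c x :: real assumes "c > 0" "x > 0"
  shows "x \<le> 1 / c * (x / (1 + x)) \<longleftrightarrow> x \<le> (1 - c) / c"
proof -
  have pos: "c * (1 + x) > 0" using assms by simp
  have "x \<le> 1 / c * (x / (1 + x)) \<longleftrightarrow> x * (c * (1 + x)) \<le> x * 1"
    using pos_le_divide_eq[OF pos, of x x] by simp
  also have "\<dots> \<longleftrightarrow> c * (1 + x) \<le> 1"
    using mult_le_cancel_left_pos[OF assms(2)] by blast
  also have "\<dots> \<longleftrightarrow> x \<le> (1 - c) / c"
    using assms by (simp add: le_divide_eq algebra_simps)
  finally show ?thesis .
qed

lemma frac_one_plus_div_le_iff:
  fixes c x :: real assumes "c > 0" "x > 0"
  shows "1 / c * (x / (1 + x)) \<le> x \<longleftrightarrow> (1 - c) / c \<le> x"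
proof -
  have pos: "c * (1 + x) > 0" using assms by simp
  have "1 / c * (x / (1 + x)) \<le> x \<longleftrightarrow> x * 1 \<le> x * (c * (1 + x))"
    using pos_divide_le_eq[OF pos, of x x] by simp
  also have "\<dots> \<longleftrightarrow> 1 \<le> c * (1 + x)"
    using mult_le_cancel_left_pos[OF assms(2)] by blast
  also have "\<dots> \<longleftrightarrow> (1 - c) / c \<le> x"
    using assms by (simp add: divide_le_eq algebra_simps)
  finally show ?thesis .
qed

section \<open>Real sequences\<close>

lemma limsup_perturbed_recursion:
  fixes D r e :: "nat \<Rightarrow> real" and \<psi> :: "real \<Rightarrow> real"
  assumes D0: "\<And>k. 0 \<le> D k" and DB: "\<And>k. D k \<le> B"
    and r: "r \<longlonglongrightarrow> \<alpha>" and rpos: "\<And>k. 0 \<le> r k" and e: "e \<longlonglongrightarrow> 0"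
    and step: "\<And>k. D (Suc k) \<le> r k * (\<psi> (D k) + e k)"
    and mono: "\<And>x y. 0 \<le> x \<Longrightarrow> x \<le> y \<Longrightarrow> \<psi> x \<le> \<psi> y"
    and lip: "\<And>x y. 0 \<le> x \<Longrightarrow> x \<le> y \<Longrightarrow> \<psi> y \<le> \<psi> x + (y - x)"
  shows "\<exists>S. 0 \<le> S \<and> limsup (\<lambda>k. ereal (D k)) = ereal S \<and> S \<le> \<alpha> * \<psi> S"
proof -
  have a0: "\<alpha> \<ge> 0" using r rpos by (auto intro: LIMSEQ_le_const)
  have "limsup (\<lambda>k. ereal (D k)) \<le> ereal B" using DB by (intro Limsup_bounded) auto
  moreover have "ereal 0 \<le> limsup (\<lambda>k. ereal (D k))" using D0 by (intro le_Limsup) auto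
  ultimately obtain S where S: "limsup (\<lambda>k. ereal (D k)) = ereal S" "0 \<le> S"
    by (cases "limsup (\<lambda>k. ereal (D k))") auto
  have key: "S \<le> \<alpha> * \<psi> S + \<alpha> * \<delta>" if d: "\<delta> > 0" for \<delta>
  proof -
    have "eventually (\<lambda>k. ereal (D k) < ereal (S + \<delta>)) sequentially"
      using S d by (intro Limsup_lessD) auto
    then have ev: "eventually (\<lambda>k. ereal (D (Suc k)) \<le> ereal (r k * (\<psi> (S + \<delta>) + e k))) sequentially"
    proof eventually_elim
      case (elim k)
      have "\<psi> (D k) \<le> \<psi> (S + \<delta>)" using mono D0 elim by auto
      then have "r k * (\<psi> (D k) + e k) \<le> r k * (\<psi> (S + \<delta>) + e k)"
        using rpos by (intro mult_left_mono) auto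
      then show ?case using step[of k] by simp
    qed
    have lim: "(\<lambda>k. ereal (r k * (\<psi> (S + \<delta>) + e k))) \<longlonglongrightarrow> ereal (\<alpha> * (\<psi> (S + \<delta>) + 0))"
      unfolding lim_ereal by (intro tendsto_mult tendsto_add r e tendsto_const)
    have "limsup (\<lambda>k. ereal (D (Suc k))) \<le> ereal (\<alpha> * (\<psi> (S + \<delta>) + 0))"
      using Limsup_mono[OF ev] lim_imp_Limsup[OF _ lim] by simp
    moreover have "limsup (\<lambda>k. ereal (D (Suc k))) = limsup (\<lambda>k. ereal (D k))"
      using limsup_shift[of "\<lambda>k. ereal (D k)"] by simp
    moreover have "\<alpha> * \<psi> (S + \<delta>) \<le> \<alpha> * (\<psi> S + \<delta>)"
      using lip[of S "S + \<delta>"] S d a0 by (intro mult_left_mono) auto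
    ultimately show ?thesis using S by (simp add: distrib_left)
  qed
  have "S \<le> \<alpha> * \<psi> S"
  proof (rule field_le_epsilon)
    fix \<epsilon> :: real assume "\<epsilon> > 0"
    moreover have "\<alpha> * (\<epsilon> / (\<alpha> + 1)) \<le> \<epsilon>"
      using \<open>\<epsilon> > 0\<close> a0 by (simp add: field_simps)
    ultimately show "S \<le> \<alpha> * \<psi> S + \<epsilon>"
      using key[of "\<epsilon> / (\<alpha> + 1)"] a0 by simp
  qed
  then show ?thesis using S by blast
qed

lemma liminf_perturbed_recursion:
  fixes D r e :: "nat \<Rightarrow> real" and \<psi> :: "real \<Rightarrow> real"
  assumes D0: "\<And>k. 0 \<le> D k" and DB: "\<And>k. D k \<le> B"
    and r: "r \<longlonglongrightarrow> \<alpha>" and rpos: "\<And>k. 0 \<le> r k" and e: "e \<longlonglongrightarrow> 0"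
    and step: "\<And>k. r k * (\<psi> (D k) + e k) \<le> D (Suc k)"
    and mono: "\<And>x y. 0 \<le> x \<Longrightarrow> x \<le> y \<Longrightarrow> \<psi> x \<le> \<psi> y"
    and lip: "\<And>x y. 0 \<le> x \<Longrightarrow> x \<le> y \<Longrightarrow> \<psi> y \<le> \<psi> x + (y - x)"
  shows "\<exists>I. 0 \<le> I \<and> liminf (\<lambda>k. ereal (D k)) = ereal I \<and> \<alpha> * \<psi> I \<le> I"
proof -
  have a0: "\<alpha> \<ge> 0" using r rpos by (auto intro: LIMSEQ_le_const)
  have "liminf (\<lambda>k. ereal (D k)) \<le> ereal B" using DB by (intro Liminf_le) auto
  moreover have "ereal 0 \<le> liminf (\<lambda>k. ereal (D k))" using D0 by (intro Liminf_bounded) auto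
  ultimately obtain I where I: "liminf (\<lambda>k. ereal (D k)) = ereal I" "0 \<le> I"
    by (cases "liminf (\<lambda>k. ereal (D k))") auto
  have key: "\<alpha> * \<psi> I \<le> I + \<alpha> * \<delta>" if d: "\<delta> > 0" for \<delta>
  proof -
    have "eventually (\<lambda>k. ereal (I - \<delta>) < ereal (D k)) sequentially"
      using I d by (intro less_LiminfD) auto
    then have ev: "eventually (\<lambda>k. ereal (r k * ((\<psi> I - \<delta>) + e k)) \<le> ereal (D (Suc k))) sequentially"
    proof eventually_elim
      case (elim k)
      define m where "m = max 0 (I - \<delta>)"
      have "\<psi> m \<le> \<psi> (D k)" using mono D0 elim unfolding m_def by auto
      moreover have "\<psi> I \<le> \<psi> m + (I - m)" using lip[of m I] I d unfolding m_def by auto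
      ultimately have "\<psi> I - \<delta> \<le> \<psi> (D k)" unfolding m_def by linarith
      then have "r k * ((\<psi> I - \<delta>) + e k) \<le> r k * (\<psi> (D k) + e k)"
        using rpos by (intro mult_left_mono) auto
      then show ?case using step[of k] by simp
    qed
    have lim: "(\<lambda>k. ereal (r k * ((\<psi> I - \<delta>) + e k))) \<longlonglongrightarrow> ereal (\<alpha> * ((\<psi> I - \<delta>) + 0))"
      unfolding lim_ereal by (intro tendsto_mult tendsto_add r e tendsto_const)
    have "ereal (\<alpha> * ((\<psi> I - \<delta>) + 0)) \<le> liminf (\<lambda>k. ereal (D (Suc k)))"
      using Liminf_mono[OF ev] lim_imp_Liminf[OF _ lim] by simp
    moreover have "liminf (\<lambda>k. ereal (D (Suc k))) = liminf (\<lambda>k. ereal (D k))"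
      using liminf_shift[of "\<lambda>k. ereal (D k)"] by simp
    ultimately show ?thesis using I by (simp add: algebra_simps)
  qed
  have "\<alpha> * \<psi> I \<le> I"
  proof (rule field_le_epsilon)
    fix \<epsilon> :: real assume "\<epsilon> > 0"
    moreover have "\<alpha> * (\<epsilon> / (\<alpha> + 1)) \<le> \<epsilon>"
      using \<open>\<epsilon> > 0\<close> a0 by (simp add: field_simps)
    ultimately show "\<alpha> * \<psi> I \<le> I + \<epsilon>"
      using key[of "\<epsilon> / (\<alpha> + 1)"] a0 by simp
  qed
  then show ?thesis using I by blast
qed

lemma filterlim_at_top_ratio_gt_1:
  fixes q :: "nat \<Rightarrow> real"
  assumes pos: "\<forall>k. q k > 0" and r: "(\<lambda>k. q (Suc k) / q k) \<longlonglongrightarrow> \<beta>" and b: "\<beta> > 1"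
  shows "filterlim q at_top sequentially"
proof -
  define \<theta> where "\<theta> = (1 + \<beta>) / 2"
  have th: "1 < \<theta>" "\<theta> < \<beta>" unfolding \<theta>_def using b by auto
  obtain N where N: "\<forall>k\<ge>N. q (Suc k) / q k > \<theta>"
    using order_tendstoD(1)[OF r th(2)] by (auto simp: eventually_sequentially)
  have grow: "q (N + n) \<ge> \<theta> ^ n * q N" for n
  proof (induction n)
    case 0 then show ?case by simp
  next
    case (Suc n)
    have "q (Suc (N + n)) > \<theta> * q (N + n)" using N[rule_format, of "N+n"] pos
      by (simp add: field_simps)
    moreover have "\<theta> * q (N + n) \<ge> \<theta> * (\<theta> ^ n * q N)" using Suc th by (intro mult_left_mono) auto
    ultimately show ?case by simp
  qed
  show ?thesis unfolding filterlim_at_top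
  proof
    fix Z :: real
    obtain n0 where n0: "Z / q N < \<theta> ^ n0" using real_arch_pow[OF th(1)] by blast
    show "eventually (\<lambda>k. Z \<le> q k) sequentially"
      unfolding eventually_sequentially
    proof (intro exI allI impI)
      fix k assume k: "N + n0 \<le> k"
      define n where "n = k - N"
      have n: "k = N + n" "n0 \<le> n" using k unfolding n_def by auto
      have "Z < \<theta> ^ n0 * q N" using n0 pos by (simp add: field_simps)
      also have "\<dots> \<le> \<theta> ^ n * q N" using pos[rule_format, of N] th n by (intro mult_right_mono power_increasing) auto
      also have "\<dots> \<le> q k" using grow n by simp
      finally show "Z \<le> q k" by simp
    qed
  qed
qed

lemma affine_recursion_bounded:
  fixes x a :: "nat \<Rightarrow> real"
  assumes x0: "\<forall>k. 0 \<le> x k" and step: "\<forall>k. x (Suc k) \<le> a k * x k + b"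
    and a: "a \<longlonglongrightarrow> \<alpha>" and a1: "\<alpha> < 1" and b: "b \<ge> 0" and a0: "\<alpha> \<ge> 0"
  shows "\<exists>B. \<forall>k. x k \<le> B"
proof -
  define \<theta> where "\<theta> = (1 + \<alpha>) / 2"
  have th: "\<alpha> < \<theta>" "\<theta> < 1" unfolding \<theta>_def using a1 by auto
  obtain N where N: "\<forall>k\<ge>N. a k < \<theta>"
    using order_tendstoD(2)[OF a th(1)] by (auto simp: eventually_sequentially)
  define Mx where "Mx = max (x N) (b / (1 - \<theta>))"
  have "b / (1 - \<theta>) \<le> Mx" unfolding Mx_def by simp
  then have "(1 - \<theta>) * (b / (1 - \<theta>)) \<le> (1 - \<theta>) * Mx" using th by (intro mult_left_mono) auto
  then have Mxb: "b \<le> (1 - \<theta>) * Mx" using th by simp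
  have ind: "x (N + n) \<le> Mx" for n
  proof (induction n)
    case 0 then show ?case unfolding Mx_def by simp
  next
    case (Suc n)
    have "a (N+n) * x (N+n) \<le> \<theta> * x (N+n)" using N x0 by (intro mult_right_mono) (auto intro: less_imp_le)
    also have "\<dots> \<le> \<theta> * Mx" using Suc th a0 by (intro mult_left_mono) auto
    finally have "x (Suc (N+n)) \<le> \<theta> * Mx + b" using step[rule_format, of "N+n"] by simp
    also have "\<dots> \<le> Mx" using Mxb by (simp add: algebra_simps)
    finally show ?case by simp
  qed
  show ?thesis
  proof (intro exI allI)
    fix k
    show "x k \<le> max (Max (x ` {..N})) Mx"
    proof (cases "k \<le> N")
      case True then show ?thesis by (simp add: le_max_iff_disj)
    next
      case False
      then have "k = N + (k - N)" by simp
      then show ?thesis using ind[of "k - N"] by (metis le_max_iff_disj)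
    qed
  qed
qed

lemma affine_recursion_geometric_bound:
  fixes x a :: "nat \<Rightarrow> real"
  assumes x0: "\<forall>k. 0 \<le> x k" and step: "\<forall>k. x (Suc k) \<le> a k * x k + 1"
    and a: "a \<longlonglongrightarrow> \<alpha>" and th: "\<alpha> < \<theta>" "1 < \<theta>"
  shows "\<exists>B. \<forall>k. x k \<le> B * \<theta> ^ k"
proof -
  obtain N where N: "\<forall>k\<ge>N. a k < \<theta>"
    using order_tendstoD(2)[OF a th(1)] by (auto simp: eventually_sequentially)
  define c0 where "c0 = 1 / (\<theta> - 1)"
  have c0: "c0 > 0" "\<theta> * c0 = c0 + 1" unfolding c0_def using th by (auto simp: field_simps)
  have ind: "x (N + n) + c0 \<le> \<theta> ^ n * (x N + c0)" for n
  proof (induction n)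
    case 0 then show ?case by simp
  next
    case (Suc n)
    have "a (N+n) * x (N+n) \<le> \<theta> * x (N+n)" using N x0 by (intro mult_right_mono) (auto intro: less_imp_le)
    then have "x (Suc (N+n)) + c0 \<le> \<theta> * (x (N+n) + c0)"
      using step[rule_format, of "N+n"] c0 by (simp add: algebra_simps)
    also have "\<dots> \<le> \<theta> * (\<theta> ^ n * (x N + c0))" using Suc th by (intro mult_left_mono) auto
    finally show ?case by simp
  qed
  define Mx where "Mx = Max (x ` {..N})"
  have Mx0: "Mx \<ge> 0" unfolding Mx_def using x0 by (meson Max_ge atMost_iff finite_atMost finite_imageI image_eqI order.trans order_refl)
  show ?thesis
  proof (intro exI allI)
    fix k
    have t1: "1 \<le> \<theta> ^ k" using th by simp
    show "x k \<le> (Mx + (x N + c0)) * \<theta> ^ k"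
    proof (cases "k \<le> N")
      case True
      then have "x k \<le> Mx" unfolding Mx_def by simp
      also have "\<dots> \<le> Mx * \<theta> ^ k" using t1 Mx0 by (simp add: mult_le_cancel_left1)
      also have "\<dots> \<le> (Mx + (x N + c0)) * \<theta> ^ k" using x0 c0 th by (intro mult_right_mono) (auto simp: less_imp_le)
      finally show ?thesis .
    next
      case False
      then have k: "k = N + (k - N)" by simp
      have "x k \<le> \<theta> ^ (k - N) * (x N + c0)" using ind[of "k - N"] k c0 by simp
      also have "\<dots> \<le> \<theta> ^ k * (x N + c0)" using th x0 c0
        by (intro mult_right_mono power_increasing) (auto simp: less_imp_le add_nonneg_nonneg)
      also have "\<dots> \<le> (Mx + (x N + c0)) * \<theta> ^ k" using Mx0 th by (simp add: algebra_simps)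
      finally show ?thesis .
    qed
  qed
qed

lemma stolz_cesaro_zero:
  fixes t \<sigma> :: "nat \<Rightarrow> real"
  assumes t0: "\<forall>k. 0 \<le> t k" and inc: "\<forall>k. \<sigma> k < \<sigma> (Suc k)"
    and sig: "filterlim \<sigma> at_top sequentially"
    and q: "(\<lambda>k. t k / (\<sigma> (Suc k) - \<sigma> k)) \<longlonglongrightarrow> 0"
  shows "(\<lambda>k. (\<Sum>l<k. t l) / \<sigma> k) \<longlonglongrightarrow> 0"
proof (rule LIMSEQ_I)
  fix r :: real assume r: "r > 0"
  define \<epsilon> where "\<epsilon> = r / 2"
  have e: "\<epsilon> > 0" unfolding \<epsilon>_def using r by simp
  obtain N where N: "\<forall>k\<ge>N. t k / (\<sigma> (Suc k) - \<sigma> k) < \<epsilon>"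
    using order_tendstoD(2)[OF q e] by (auto simp: eventually_sequentially)
  have tN: "t k \<le> \<epsilon> * (\<sigma> (Suc k) - \<sigma> k)" if "k \<ge> N" for k
    using N[rule_format, OF that] inc[rule_format, of k] by (simp add: divide_less_eq less_imp_le)
  define A where "A = (\<Sum>l<N. t l) + \<epsilon> * \<bar>\<sigma> N\<bar>"
  have A0: "A \<ge> 0" unfolding A_def using t0 e by (simp add: sum_nonneg)
  have Tb: "(\<Sum>l<N+n. t l) \<le> (\<Sum>l<N. t l) + \<epsilon> * (\<sigma> (N+n) - \<sigma> N)" for n
  proof (induction n)
    case 0 then show ?case by simp
  next
    case (Suc n)
    then show ?case using tN[of "N+n"] by (simp add: algebra_simps)
  qed
  have ev: "eventually (\<lambda>k. \<sigma> k > max 1 (A / \<epsilon>)) sequentially"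
    using sig unfolding filterlim_at_top_dense by (metis max_less_iff_conj)
  then obtain N2 where N2: "\<forall>k\<ge>N2. \<sigma> k > max 1 (A / \<epsilon>)" by (auto simp: eventually_sequentially)
  show "\<exists>no. \<forall>n\<ge>no. norm ((\<Sum>l<n. t l) / \<sigma> n - 0) < r"
  proof (intro exI allI impI)
    fix k assume k: "max N N2 \<le> k"
    have sk: "\<sigma> k > 1" "\<sigma> k > A / \<epsilon>" using N2 k by auto
    have kN: "N \<le> k" using k by simp
    have "(\<Sum>l<k. t l) \<le> (\<Sum>l<N. t l) + \<epsilon> * (\<sigma> k - \<sigma> N)"
      using Tb[of "k - N"] kN by simp
    moreover have "\<epsilon> * (- \<sigma> N) \<le> \<epsilon> * \<bar>\<sigma> N\<bar>" using e by (intro mult_left_mono) auto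
    ultimately have "(\<Sum>l<k. t l) \<le> A + \<epsilon> * \<sigma> k"
      unfolding A_def by (simp add: algebra_simps)
    also have "\<dots> < \<epsilon> * \<sigma> k + \<epsilon> * \<sigma> k" using sk e by (simp add: field_simps)
    finally have "(\<Sum>l<k. t l) < r * \<sigma> k" unfolding \<epsilon>_def by simp
    moreover have "(\<Sum>l<k. t l) \<ge> 0" using t0 by (simp add: sum_nonneg)
    ultimately show "norm ((\<Sum>l<k. t l) / \<sigma> k - 0) < r" using sk by (simp add: divide_less_eq)
  qed
qed

lemma partial_sums_at_top_if_not_summable:
  fixes f :: "nat \<Rightarrow> real"
  assumes f0: "\<forall>k. f k \<ge> 0" and ns: "\<not> summable f"
  shows "filterlim (\<lambda>n. \<Sum>i<n. f i) at_top sequentially"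
  unfolding filterlim_at_top
proof
  fix Z :: real
  have inc: "incseq (\<lambda>n. \<Sum>i<n. f i)"
    using f0 by (intro incseq_SucI) simp
  show "eventually (\<lambda>n. Z \<le> (\<Sum>i<n. f i)) sequentially"
  proof (rule ccontr)
    assume a: "\<not> eventually (\<lambda>n. Z \<le> (\<Sum>i<n. f i)) sequentially"
    have "\<forall>n. (\<Sum>i<n. f i) \<le> Z"
    proof (rule ccontr)
      assume "\<not> (\<forall>n. (\<Sum>i<n. f i) \<le> Z)"
      then obtain N where N: "Z < (\<Sum>i<N. f i)" by (auto simp: not_le)
      have "\<forall>n\<ge>N. Z \<le> (\<Sum>i<n. f i)"
        using N inc by (auto simp: incseq_def intro: order_trans[OF less_imp_le])
      then show False using a by (auto simp: eventually_sequentially)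
    qed
    then obtain L where "(\<lambda>n. \<Sum>i<n. f i) \<longlonglongrightarrow> L" using incseq_convergent[OF inc] by blast
    then have "summable f" unfolding summable_iff_convergent convergent_def by blast
    then show False using ns by simp
  qed
qed

lemma inverse_ratio_tendsto:
  fixes C :: "nat \<Rightarrow> real"
  assumes "(\<lambda>k. C (Suc k) / C k) \<longlonglongrightarrow> c" and "c \<noteq> 0"
  shows "(\<lambda>k. C k / C (Suc k)) \<longlonglongrightarrow> 1 / c"
proof -
  have "(\<lambda>k. inverse (C (Suc k) / C k)) \<longlonglongrightarrow> inverse c" using assms by (intro tendsto_inverse)
  then show ?thesis by (simp add: inverse_eq_divide)
qed

lemma weighted_square_partial_sums_tendsto_0:
  fixes C U :: "nat \<Rightarrow> real"
  assumes Cpos: "\<forall>k. C k > 0" and U0: "\<forall>k. U k \<ge> 0"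
    and Cr: "(\<lambda>k. C (Suc k) / C k) \<longlonglongrightarrow> c" and \<theta>: "c < \<theta>" "1 < \<theta>"
    and small: "(\<lambda>k. U k / C k * (\<theta>\<^sup>2) ^ k) \<longlonglongrightarrow> 0"
  shows "(\<lambda>k. U k * C k * (\<Sum>l<Suc k. 1 / C l)\<^sup>2) \<longlonglongrightarrow> 0"
proof -
  define v where "v k = (\<Sum>l<Suc k. 1 / C l) * C k" for k
  have v0: "\<forall>k. 0 \<le> v k" unfolding v_def using Cpos by (simp add: sum_nonneg less_imp_le)
  have "\<forall>k. v (Suc k) \<le> C (Suc k) / C k * v k + 1"
    unfolding v_def using Cpos by (simp add: field_simps)
  then obtain B where B: "\<forall>k. v k \<le> B * \<theta> ^ k"
    using affine_recursion_geometric_bound[OF v0 _ Cr \<theta>] by blast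
  have bound: "U k * C k * (\<Sum>l<Suc k. 1 / C l)\<^sup>2 \<le> B\<^sup>2 * (U k / C k * (\<theta>\<^sup>2) ^ k)" for k
  proof -
    have "U k * C k * (\<Sum>l<Suc k. 1 / C l)\<^sup>2 = U k / C k * (v k)\<^sup>2"
      unfolding v_def using Cpos by (simp add: power2_eq_square field_simps)
    also have "\<dots> \<le> U k / C k * (B * \<theta> ^ k)\<^sup>2"
      using v0 B U0 Cpos by (intro mult_left_mono power_mono) (auto simp: less_imp_le)
    also have "\<dots> = B\<^sup>2 * (U k / C k * (\<theta>\<^sup>2) ^ k)"
      by (simp add: power_mult_distrib power_mult[symmetric] mult.commute)
    finally show ?thesis .
  qed
  show ?thesis
  proof (rule tendsto_sandwich[of "\<lambda>_. 0" _ _ "\<lambda>k. B\<^sup>2 * (U k / C k * (\<theta>\<^sup>2) ^ k)"])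
    show "eventually (\<lambda>k. 0 \<le> U k * C k * (\<Sum>l<Suc k. 1 / C l)\<^sup>2) sequentially"
      using U0 Cpos by (simp add: less_imp_le)
    show "eventually (\<lambda>k. U k * C k * (\<Sum>l<Suc k. 1 / C l)\<^sup>2 \<le> B\<^sup>2 * (U k / C k * (\<theta>\<^sup>2) ^ k)) sequentially"
      using bound by simp
    show "(\<lambda>k. B\<^sup>2 * (U k / C k * (\<theta>\<^sup>2) ^ k)) \<longlonglongrightarrow> 0"
      using tendsto_mult_right_zero[OF small] by simp
  qed simp
qed

lemma bounded_away_from_0_if_repelling:
  fixes D :: "nat \<Rightarrow> real"
  assumes D0: "\<And>k. 0 \<le> D k" and \<theta>: "\<theta> > 1"
    and low: "\<And>k. k \<ge> N \<Longrightarrow> \<theta> * (D k / (1 + D k)) \<le> D (Suc k)" and DN: "D N > 0"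
  shows "\<exists>m>0. \<forall>k\<ge>N. m \<le> D k"
proof -
  define \<delta> where "\<delta> = (\<theta> - 1) / 2"
  have \<delta>: "\<delta> > 0" "1 + \<delta> \<le> \<theta>" unfolding \<delta>_def using \<theta> by (auto simp: field_simps)
  define m where "m = min (D N) \<delta>"
  have step: "m \<le> \<theta> * (x / (1 + x))" if x: "m \<le> x" for x
  proof (cases "x \<ge> \<delta>")
    case True
    have "m \<le> (1 + \<delta>) * (\<delta> / (1 + \<delta>))" unfolding m_def using \<delta> by simp
    also have "\<dots> \<le> \<theta> * (\<delta> / (1 + \<delta>))" using \<delta> by (intro mult_right_mono) auto
    also have "\<dots> \<le> \<theta> * (x / (1 + x))"
      using frac_one_plus_mono[of \<delta> x] True \<delta> \<theta> by (intro mult_left_mono) auto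
    finally show ?thesis .
  next
    case False
    have x0: "x \<ge> 0" using x \<delta> DN unfolding m_def by linarith
    have "m \<le> (1 + \<delta>) * (x / (1 + \<delta>))" using x \<delta> by simp
    also have "\<dots> \<le> \<theta> * (x / (1 + \<delta>))" using \<delta> x0 by (intro mult_right_mono) auto
    also have "\<dots> \<le> \<theta> * (x / (1 + x))"
      using False x0 \<theta> by (intro mult_left_mono divide_left_mono) auto
    finally show ?thesis .
  qed
  have "m \<le> D (N + n)" for n
  proof (induction n)
    case 0 then show ?case unfolding m_def by simp
  next
    case (Suc n)
    then show ?case using step low[of "N + n"] by fastforce
  qed
  then have "\<forall>k\<ge>N. m \<le> D k" by (metis le_add_diff_inverse)
  moreover have "m > 0" unfolding m_def using DN \<delta> by simp
  ultimately show ?thesis by blast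
qed

section \<open>The recursion for general scales\<close>

lemma (in prob_space) integral_pos_if_pos:
  fixes f :: "'a \<Rightarrow> real"
  assumes "integrable M f" "\<forall>x\<in>space M. f x > 0"
  shows "(\<integral>x. f x \<partial>M) > 0"
proof -
  have ge: "(\<integral>x. f x \<partial>M) \<ge> 0" using assms by (intro Bochner_Integration.integral_nonneg_AE AE_I2) (auto intro: less_imp_le)
  have "(\<integral>x. f x \<partial>M) \<noteq> 0"
  proof
    assume "(\<integral>x. f x \<partial>M) = 0"
    then have "AE x in M. f x = 0"
      using integral_nonneg_eq_0_iff_AE[OF assms(1)] assms(2) by (auto intro: less_imp_le)
    then have "AE x in M. False" by (rule AE_mp) (use assms(2) in \<open>auto intro!: AE_I2\<close>)
    then show False by (simp add: AE_False emeasure_space_1)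
  qed
  then show ?thesis using ge by simp
qed

locale harmonic_recursion =
  fixes M :: "'a measure" and \<rho> :: "'a \<Rightarrow> real" and C U d :: "nat \<Rightarrow> real"
  assumes prob: "prob_space M"
    and rho_measurable[measurable]: "\<rho> \<in> borel_measurable M"
    and rho_pos: "\<And>x. x \<in> space M \<Longrightarrow> \<rho> x > 0"
    and rho_integrable: "integrable M \<rho>" and rho_mean: "(\<integral>x. \<rho> x \<partial>M) = 1"
    and C_pos: "\<And>k. C k > 0" and U_pos: "\<And>k. U k > 0" and d_0_nonneg: "d 0 \<ge> 0"
    and d_Suc_eq: "\<forall>k. d (Suc k) = (\<integral>x. C k * (U k * \<rho> x + d k) / (C k + (U k * \<rho> x + d k)) \<partial>M)"
begin

sublocale prob_space M by (rule prob)

lemma scaled_rho_nonneg: "q \<ge> 0 \<Longrightarrow> x \<in> space M \<Longrightarrow> q * \<rho> x \<ge> 0"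
  using rho_pos[of x] by simp

lemma integrable_if_bounded:
  fixes f :: "'a \<Rightarrow> real"
  assumes "f \<in> borel_measurable M" "\<forall>x\<in>space M. \<bar>f x\<bar> \<le> B"
  shows "integrable M f"
  using assms by (intro integrable_const_bound[where B=B]) auto

text \<open>One step of the recursion in the scale \<open>C\<^sub>k\<close> is \<open>d\<^sub>k\<^sub>+\<^sub>1 = C\<^sub>k \<phi>(U\<^sub>k/C\<^sub>k, d\<^sub>k/C\<^sub>k)\<close>
  (\<open>d_Suc_phi\<close>), and in the scale \<open>U\<^sub>k\<close> it is \<open>d\<^sub>k\<^sub>+\<^sub>1 = U\<^sub>k \<chi>(U\<^sub>k/C\<^sub>k, d\<^sub>k/U\<^sub>k)\<close> (\<open>d_Suc_chi\<close>).\<close>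

definition phi :: "real \<Rightarrow> real \<Rightarrow> real" where
  "phi q D = (\<integral>x. (q * \<rho> x + D) / (1 + q * \<rho> x + D) \<partial>M)"

lemma integrable_phi_integrand:
  assumes "q \<ge> 0" "D \<ge> 0"
  shows "integrable M (\<lambda>x. (q * \<rho> x + D) / (1 + q * \<rho> x + D))"
proof (rule integrable_if_bounded[where B=1])
  show "(\<lambda>x. (q * \<rho> x + D) / (1 + q * \<rho> x + D)) \<in> borel_measurable M" by measurable
  show "\<forall>x\<in>space M. \<bar>(q * \<rho> x + D) / (1 + q * \<rho> x + D)\<bar> \<le> 1"
  proof
    fix x assume "x \<in> space M"
    then have "q * \<rho> x \<ge> 0" using scaled_rho_nonneg assms by simp
    then show "\<bar>(q * \<rho> x + D) / (1 + q * \<rho> x + D)\<bar> \<le> 1" using assms by simp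
  qed
qed

lemma phi_ge_frac:
  assumes "q \<ge> 0" "D \<ge> 0"
  shows "D / (1 + D) \<le> phi q D"
proof -
  have "(\<integral>x. D / (1 + D) \<partial>M) \<le> phi q D" unfolding phi_def
  proof (rule integral_mono[OF _ integrable_phi_integrand[OF assms]])
    fix x assume "x \<in> space M"
    then have y: "q * \<rho> x \<ge> 0" using scaled_rho_nonneg assms by simp
    show "D / (1 + D) \<le> (q * \<rho> x + D) / (1 + q * \<rho> x + D)"
      using y assms by (simp add: divide_simps) (simp add: algebra_simps)
  qed simp
  then show ?thesis by (simp add: prob_space)
qed

lemma phi_less_1:
  assumes "q \<ge> 0" "D \<ge> 0"
  shows "phi q D < 1"
proof -
  have i2: "integrable M (\<lambda>x. 1 / (1 + q * \<rho> x + D))"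
  proof (rule integrable_if_bounded[where B=1])
    show "(\<lambda>x. 1 / (1 + q * \<rho> x + D)) \<in> borel_measurable M" by measurable
    show "\<forall>x\<in>space M. \<bar>1 / (1 + q * \<rho> x + D)\<bar> \<le> 1"
      using scaled_rho_nonneg assms by (auto simp: divide_simps)
  qed
  have "(\<integral>x. 1 / (1 + q * \<rho> x + D) \<partial>M) > 0"
    using scaled_rho_nonneg assms by (intro integral_pos_if_pos[OF i2]) (auto simp: add_pos_nonneg)
  moreover have "phi q D + (\<integral>x. 1 / (1 + q * \<rho> x + D) \<partial>M) = (\<integral>x. (q * \<rho> x + D) / (1 + q * \<rho> x + D) + 1 / (1 + q * \<rho> x + D) \<partial>M)"
    unfolding phi_def using integrable_phi_integrand[OF assms] i2 by simp
  also have "\<dots> = (\<integral>x. 1 \<partial>M)"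
  proof (rule Bochner_Integration.integral_cong)
    fix x assume "x \<in> space M"
    then have y: "q * \<rho> x \<ge> 0" using scaled_rho_nonneg assms by simp
    then show "(q * \<rho> x + D) / (1 + q * \<rho> x + D) + 1 / (1 + q * \<rho> x + D) = 1"
      using assms by (simp add: field_simps)
  qed simp
  ultimately show ?thesis by (simp add: prob_space)
qed

lemma phi_mono_left:
  assumes "0 \<le> q" "q \<le> q'" "D \<ge> 0"
  shows "phi q D \<le> phi q' D" "phi q' D \<le> phi q D + (q' - q)"
proof -
  have q': "q' \<ge> 0" using assms by simp
  have pointwise: "(q * \<rho> x + D) / (1 + q * \<rho> x + D) \<le> (q' * \<rho> x + D) / (1 + q' * \<rho> x + D)"
      "(q' * \<rho> x + D) / (1 + q' * \<rho> x + D) \<le> (q * \<rho> x + D) / (1 + q * \<rho> x + D) + (q' - q) * \<rho> x"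
    if x: "x \<in> space M" for x
  proof -
    have "0 \<le> q * \<rho> x + D" "q * \<rho> x + D \<le> q' * \<rho> x + D"
      using rho_pos[OF x] assms by (auto intro: mult_right_mono)
    from frac_one_plus_mono[OF this] frac_one_plus_increment_le[OF this]
    show "(q * \<rho> x + D) / (1 + q * \<rho> x + D) \<le> (q' * \<rho> x + D) / (1 + q' * \<rho> x + D)"
      "(q' * \<rho> x + D) / (1 + q' * \<rho> x + D) \<le> (q * \<rho> x + D) / (1 + q * \<rho> x + D) + (q' - q) * \<rho> x"
      by (simp_all add: add.assoc left_diff_distrib)
  qed
  show "phi q D \<le> phi q' D" unfolding phi_def
    by (rule integral_mono[OF integrable_phi_integrand[OF assms(1,3)]
          integrable_phi_integrand[OF q' assms(3)] pointwise(1)])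
  have "phi q' D \<le> (\<integral>x. (q * \<rho> x + D) / (1 + q * \<rho> x + D) + (q' - q) * \<rho> x \<partial>M)"
    unfolding phi_def
    by (rule integral_mono[OF integrable_phi_integrand[OF q' assms(3)] _ pointwise(2)])
       (intro Bochner_Integration.integrable_add integrable_phi_integrand[OF assms(1,3)]
         integrable_mult_right rho_integrable)
  also have "\<dots> = phi q D + (q' - q)"
    unfolding phi_def using rho_mean
    by (subst Bochner_Integration.integral_add[OF integrable_phi_integrand[OF assms(1,3)]
          integrable_mult_right[OF rho_integrable]]) simp
  finally show "phi q' D \<le> phi q D + (q' - q)" .
qed

lemma phi_mono_right:
  assumes "0 \<le> q" "0 \<le> D" "D \<le> D'"
  shows "phi q D \<le> phi q D'" "phi q D' \<le> phi q D + (D' - D)"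
proof -
  have D': "D' \<ge> 0" using assms by simp
  show "phi q D \<le> phi q D'" unfolding phi_def
  proof (rule integral_mono[OF integrable_phi_integrand[OF assms(1,2)] integrable_phi_integrand[OF assms(1) D']])
    fix x assume x: "x \<in> space M"
    show "(q * \<rho> x + D) / (1 + q * \<rho> x + D) \<le> (q * \<rho> x + D') / (1 + q * \<rho> x + D')"
      using frac_one_plus_mono[of "q * \<rho> x + D" "q * \<rho> x + D'"] scaled_rho_nonneg[OF assms(1) x] assms by (simp add: add.assoc)
  qed
  have "phi q D' \<le> (\<integral>x. (q * \<rho> x + D) / (1 + q * \<rho> x + D) + (D' - D) \<partial>M)"
    unfolding phi_def
  proof (rule integral_mono[OF integrable_phi_integrand[OF assms(1) D']])
    show "integrable M (\<lambda>x. (q * \<rho> x + D) / (1 + q * \<rho> x + D) + (D' - D))"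
      by (rule Bochner_Integration.integrable_add[OF integrable_phi_integrand[OF assms(1,2)]]) simp
    fix x assume x: "x \<in> space M"
    show "(q * \<rho> x + D') / (1 + q * \<rho> x + D') \<le> (q * \<rho> x + D) / (1 + q * \<rho> x + D) + (D' - D)"
      using frac_one_plus_increment_le[of "q * \<rho> x + D" "q * \<rho> x + D'"] scaled_rho_nonneg[OF assms(1) x] assms by (simp add: add.assoc)
  qed
  also have "\<dots> = phi q D + (D' - D)"
    unfolding phi_def using integrable_phi_integrand[OF assms(1,2)] by (simp add: prob_space)
  finally show "phi q D' \<le> phi q D + (D' - D)" .
qed

lemma phi_0_left: "phi 0 D = D / (1 + D)"
  unfolding phi_def by (simp add: prob_space)

lemma phi_0_right_pos: assumes "q > 0" shows "phi q 0 > 0"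
  unfolding phi_def
proof (rule integral_pos_if_pos)
  show "integrable M (\<lambda>x. (q * \<rho> x + 0) / (1 + q * \<rho> x + 0))" using integrable_phi_integrand[of q 0] assms by simp
  show "\<forall>x\<in>space M. 0 < (q * \<rho> x + 0) / (1 + q * \<rho> x + 0)"
  proof
    fix x assume x: "x \<in> space M"
    have "q * \<rho> x > 0" using rho_pos[OF x] assms by simp
    then show "0 < (q * \<rho> x + 0) / (1 + q * \<rho> x + 0)" by simp
  qed
qed

lemma phi_concave_right:
  assumes "q \<ge> 0" "x \<ge> 0" "t \<ge> 1"
  shows "phi q (t * x) + (t - 1) * phi q 0 \<le> t * phi q x"
proof -
  have tx: "t * x \<ge> 0" using assms by simp
  define F where "F = (\<lambda>y. (q * \<rho> y + t * x) / (1 + q * \<rho> y + t * x))"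
  define G where "G = (\<lambda>y. (q * \<rho> y + 0) / (1 + q * \<rho> y + 0))"
  have iF: "integrable M F" unfolding F_def by (rule integrable_phi_integrand[OF assms(1) tx])
  have iG: "integrable M G" unfolding G_def by (rule integrable_phi_integrand[OF assms(1)]) simp
  have "phi q (t * x) + (t - 1) * phi q 0 = (\<integral>y. F y \<partial>M) + (\<integral>y. (t - 1) * G y \<partial>M)"
    unfolding phi_def F_def G_def by (simp only: integral_mult_right_zero)
  also have "\<dots> = (\<integral>y. F y + (t - 1) * G y \<partial>M)"
    by (rule Bochner_Integration.integral_add[symmetric, OF iF integrable_mult_right[OF iG]])
  also have "\<dots> = (\<integral>y. (q * \<rho> y + t * x) / (1 + q * \<rho> y + t * x) + (t - 1) * ((q * \<rho> y + 0) / (1 + q * \<rho> y + 0)) \<partial>M)"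
    unfolding F_def G_def by (rule refl)
  also have "\<dots> \<le> (\<integral>y. t * ((q * \<rho> y + x) / (1 + q * \<rho> y + x)) \<partial>M)"
  proof (rule integral_mono)
    show "integrable M (\<lambda>y. (q * \<rho> y + t * x) / (1 + q * \<rho> y + t * x) + (t - 1) * ((q * \<rho> y + 0) / (1 + q * \<rho> y + 0)))"
      using Bochner_Integration.integrable_add[OF iF integrable_mult_right[OF iG, of "t - 1"]] unfolding F_def G_def .
    show "integrable M (\<lambda>y. t * ((q * \<rho> y + x) / (1 + q * \<rho> y + x)))"
      using integrable_mult_right[OF integrable_phi_integrand[OF assms(1,2)], of t] .
    fix y assume y: "y \<in> space M"
    show "(q * \<rho> y + t * x) / (1 + q * \<rho> y + t * x) + (t - 1) * ((q * \<rho> y + 0) / (1 + q * \<rho> y + 0))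
         \<le> t * ((q * \<rho> y + x) / (1 + q * \<rho> y + x))"
      using frac_one_plus_concave[OF scaled_rho_nonneg[OF assms(1) y] assms(2,3)] by (simp add: add.assoc)
  qed
  also have "\<dots> = t * phi q x" unfolding phi_def by (rule integral_mult_right_zero)
  finally show ?thesis .
qed

lemma phi_tendsto_1:
  assumes q0: "\<forall>k. q k \<ge> 0" and q: "filterlim q at_top sequentially"
  shows "(\<lambda>k. phi (q k) 0) \<longlonglongrightarrow> 1"
proof -
  have "(\<lambda>k. (\<integral>x. (q k * \<rho> x + 0) / (1 + q k * \<rho> x + 0) \<partial>M)) \<longlonglongrightarrow> (\<integral>x. 1 \<partial>M)"
  proof (rule integral_dominated_convergence[where w="\<lambda>_. 1"])
    show "(\<lambda>x. 1::real) \<in> borel_measurable M" by simp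
    show "\<And>k. (\<lambda>x. (q k * \<rho> x + 0) / (1 + q k * \<rho> x + 0)) \<in> borel_measurable M" by measurable
    show "integrable M (\<lambda>x. 1::real)" by simp
    show "AE x in M. (\<lambda>k. (q k * \<rho> x + 0) / (1 + q k * \<rho> x + 0)) \<longlonglongrightarrow> 1"
    proof (rule AE_I2)
      fix x assume x: "x \<in> space M"
      have lim: "filterlim (\<lambda>k. 1 + q k * \<rho> x) at_top sequentially"
        by (rule filterlim_tendsto_add_at_top[OF tendsto_const])
           (rule filterlim_at_top_mult_tendsto_pos[OF tendsto_const rho_pos[OF x] q])
      have "(\<lambda>k. 1 - inverse (1 + q k * \<rho> x)) \<longlonglongrightarrow> 1 - 0"
        by (intro tendsto_diff tendsto_const tendsto_inverse_0_at_top[OF lim])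
      moreover have "1 - inverse (1 + q k * \<rho> x) = (q k * \<rho> x + 0) / (1 + q k * \<rho> x + 0)" for k
        using scaled_rho_nonneg[OF _ x, of "q k"] q0 by (simp add: field_simps)
      ultimately show "(\<lambda>k. (q k * \<rho> x + 0) / (1 + q k * \<rho> x + 0)) \<longlonglongrightarrow> 1" by simp
    qed
    show "AE x in M. norm ((q k * \<rho> x + 0) / (1 + q k * \<rho> x + 0)) \<le> 1" for k
    proof (rule AE_I2)
      fix x assume x: "x \<in> space M"
      have "q k * \<rho> x \<ge> 0" using scaled_rho_nonneg[OF _ x] q0 by simp
      then show "norm ((q k * \<rho> x + 0) / (1 + q k * \<rho> x + 0)) \<le> 1" by simp
    qed
  qed
  then show ?thesis unfolding phi_def by (simp add: prob_space)
qed

definition integrand :: "nat \<Rightarrow> 'a \<Rightarrow> real" where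
  "integrand k x = C k * (U k * \<rho> x + d k) / (C k + (U k * \<rho> x + d k))"

lemma integrand_measurable[measurable]: "integrand k \<in> borel_measurable M"
  unfolding integrand_def by measurable

lemma d_Suc_integral: "d (Suc k) = (\<integral>x. integrand k x \<partial>M)"
  using d_Suc_eq unfolding integrand_def by simp

lemma d_nonneg: "d k \<ge> 0"
proof (induction k)
  case 0 then show ?case using d_0_nonneg by simp
next
  case (Suc k)
  show ?case unfolding d_Suc_integral
  proof (rule Bochner_Integration.integral_nonneg_AE, rule AE_I2)
    fix x assume x: "x \<in> space M"
    have "U k * \<rho> x \<ge> 0" using U_pos rho_pos[OF x] by (simp add: less_imp_le)
    then show "0 \<le> integrand k x" unfolding integrand_def using C_pos[of k] Suc
      by (intro divide_nonneg_nonneg mult_nonneg_nonneg) auto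
  qed
qed

lemma U_rho_pos: "x \<in> space M \<Longrightarrow> U k * \<rho> x > 0"
  using U_pos rho_pos by simp

lemma integrable_integrand: "integrable M (integrand k)"
proof (rule integrable_if_bounded[where B="C k"])
  show "integrand k \<in> borel_measurable M" by simp
  show "\<forall>x\<in>space M. \<bar>integrand k x\<bar> \<le> C k"
  proof
    fix x assume x: "x \<in> space M"
    define z where "z = U k * \<rho> x + d k"
    have z: "z > 0" unfolding z_def using U_rho_pos[OF x, of k] d_nonneg[of k] by simp
    have "integrand k x = C k * z / (C k + z)" unfolding integrand_def z_def by simp
    moreover have "C k * z / (C k + z) \<le> C k" "C k * z / (C k + z) \<ge> 0"
      using parallel_frac_bounds[of "C k" z] z C_pos by auto
    ultimately show "\<bar>integrand k x\<bar> \<le> C k" by (simp only: abs_of_nonneg)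
  qed
qed

lemma d_Suc_pos: "d (Suc k) > 0"
  unfolding d_Suc_integral
proof (rule integral_pos_if_pos[OF integrable_integrand], rule ballI)
  fix x assume x: "x \<in> space M"
  have "U k * \<rho> x + d k > 0" using U_rho_pos[OF x, of k] d_nonneg[of k] by simp
  then show "integrand k x > 0" unfolding integrand_def using C_pos[of k]
    by (intro divide_pos_pos mult_pos_pos) auto
qed

lemma d_Suc_phi: "d (Suc k) = C k * phi (U k / C k) (d k / C k)"
proof -
  have Ck: "C k > 0" using C_pos by simp
  have "(\<integral>x. integrand k x \<partial>M) = (\<integral>x. C k * ((U k / C k * \<rho> x + d k / C k) / (1 + U k / C k * \<rho> x + d k / C k)) \<partial>M)"
  proof (rule Bochner_Integration.integral_cong)
    fix x assume x: "x \<in> space M"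
    have z: "U k * \<rho> x + d k > 0" using U_rho_pos[OF x, of k] d_nonneg[of k] by simp
    have e: "U k / C k * \<rho> x + d k / C k = (U k * \<rho> x + d k) / C k" by (simp add: add_divide_distrib)
    show "integrand k x = C k * ((U k / C k * \<rho> x + d k / C k) / (1 + U k / C k * \<rho> x + d k / C k))"
      unfolding integrand_def using rescale_frac_one_plus[OF Ck, of "U k * \<rho> x + d k"] z e by (simp add: add.assoc)
  qed simp
  also have "\<dots> = C k * phi (U k / C k) (d k / C k)"
    unfolding phi_def by (rule integral_mult_right_zero)
  finally show ?thesis using d_Suc_integral by simp
qed

lemma d_Suc_ge: "C k * d k / (C k + d k) \<le> d (Suc k)"
proof -
  have Ck: "C k > 0" using C_pos by simp
  have "(\<integral>x. C k * d k / (C k + d k) \<partial>M) \<le> (\<integral>x. integrand k x \<partial>M)"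
  proof (rule integral_mono[OF _ integrable_integrand])
    fix x assume x: "x \<in> space M"
    have u: "U k * \<rho> x \<ge> 0" using U_rho_pos[OF x, of k] by (simp add: less_imp_le)
    have "d k / (C k + d k) \<le> (U k * \<rho> x + d k) / (C k + (U k * \<rho> x + d k))"
      using u Ck d_nonneg[of k] by (simp add: divide_simps) (simp add: algebra_simps)
    then have "C k * (d k / (C k + d k)) \<le> C k * ((U k * \<rho> x + d k) / (C k + (U k * \<rho> x + d k)))"
      using Ck by (intro mult_left_mono) auto
    then show "C k * d k / (C k + d k) \<le> integrand k x" unfolding integrand_def by simp
  qed simp
  then show ?thesis using d_Suc_integral by (simp add: prob_space)
qed

lemma d_Suc_le: "d (Suc k) \<le> C k * d k / (C k + d k) + U k"
proof -
  have Ck: "C k > 0" using C_pos by simp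
  have "(\<integral>x. integrand k x \<partial>M) \<le> (\<integral>x. C k * d k / (C k + d k) + U k * \<rho> x \<partial>M)"
  proof (rule integral_mono[OF integrable_integrand])
    show "integrable M (\<lambda>x. C k * d k / (C k + d k) + U k * \<rho> x)"
      using rho_integrable by simp
    fix x assume x: "x \<in> space M"
    define s where "s = U k * \<rho> x"
    have u: "s \<ge> 0" unfolding s_def using U_rho_pos[OF x, of k] by (simp add: less_imp_le)
    have dk: "d k \<ge> 0" using d_nonneg by simp
    have "C k * (s + d k) / (C k + (s + d k)) - C k * d k / (C k + d k)
        = C k * C k * s / ((C k + (s + d k)) * (C k + d k))"
      using Ck u dk by (simp add: field_simps)
    also have "\<dots> \<le> C k * C k * s / (C k * C k)"
    proof (rule divide_left_mono)
      show "C k * C k \<le> (C k + (s + d k)) * (C k + d k)" using Ck u dk by (intro mult_mono) auto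
    qed (use Ck u dk in auto)
    also have "\<dots> = s" using Ck by simp
    finally show "integrand k x \<le> C k * d k / (C k + d k) + U k * \<rho> x"
      unfolding integrand_def s_def by simp
  qed
  also have "\<dots> = C k * d k / (C k + d k) + U k"
    using rho_integrable rho_mean by (simp add: prob_space)
  finally show ?thesis using d_Suc_integral by simp
qed

definition chi :: "real \<Rightarrow> real \<Rightarrow> real" where
  "chi K e = (\<integral>x. (\<rho> x + e) / (1 + K * (\<rho> x + e)) \<partial>M)"

definition eta :: "real \<Rightarrow> real \<Rightarrow> real" where
  "eta K B = (\<integral>x. K * (\<rho> x + B)^2 / (1 + K * (\<rho> x + B)) \<partial>M)"

lemma integrable_chi_integrand:
  assumes "K \<ge> 0" "e \<ge> 0"
  shows "integrable M (\<lambda>x. (\<rho> x + e) / (1 + K * (\<rho> x + e)))"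
proof (rule Bochner_Integration.integrable_bound[where f="\<lambda>x. \<rho> x + e"])
  show "integrable M (\<lambda>x. \<rho> x + e)" using rho_integrable by simp
  show "(\<lambda>x. (\<rho> x + e) / (1 + K * (\<rho> x + e))) \<in> borel_measurable M" by measurable
  show "AE x in M. norm ((\<rho> x + e) / (1 + K * (\<rho> x + e))) \<le> norm (\<rho> x + e)"
  proof (rule AE_I2)
    fix x assume x: "x \<in> space M"
    have z: "\<rho> x + e > 0" using rho_pos[OF x] assms by simp
    have "K * (\<rho> x + e) \<ge> 0" using z assms by simp
    then show "norm ((\<rho> x + e) / (1 + K * (\<rho> x + e))) \<le> norm (\<rho> x + e)"
      using z by (simp add: divide_simps)
  qed
qed

lemma integrable_eta_integrand:
  assumes "K \<ge> 0" "B \<ge> 0"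
  shows "integrable M (\<lambda>x. K * (\<rho> x + B)^2 / (1 + K * (\<rho> x + B)))"
proof (rule Bochner_Integration.integrable_bound[where f="\<lambda>x. \<rho> x + B"])
  show "integrable M (\<lambda>x. \<rho> x + B)" using rho_integrable by simp
  show "(\<lambda>x. K * (\<rho> x + B)^2 / (1 + K * (\<rho> x + B))) \<in> borel_measurable M" by measurable
  show "AE x in M. norm (K * (\<rho> x + B)^2 / (1 + K * (\<rho> x + B))) \<le> norm (\<rho> x + B)"
  proof (rule AE_I2)
    fix x assume x: "x \<in> space M"
    have z: "\<rho> x + B > 0" using rho_pos[OF x] assms by simp
    show "norm (K * (\<rho> x + B)^2 / (1 + K * (\<rho> x + B))) \<le> norm (\<rho> x + B)"
      using norm_frac_square_le[OF assms(1), of "\<rho> x + B"] z by simp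
  qed
qed

lemma chi_bounds:
  assumes K: "K \<ge> 0" and e: "0 \<le> e" "e \<le> B"
  shows "chi K e \<le> 1 + e" "1 + e - eta K B \<le> chi K e"
proof -
  have B: "B \<ge> 0" using e by simp
  have "chi K e \<le> (\<integral>x. \<rho> x + e \<partial>M)" unfolding chi_def
  proof (rule integral_mono[OF integrable_chi_integrand[OF K e(1)]])
    show "integrable M (\<lambda>x. \<rho> x + e)" using rho_integrable by simp
    fix x assume x: "x \<in> space M"
    have z: "\<rho> x + e > 0" using rho_pos[OF x] e by simp
    have "K * (\<rho> x + e) \<ge> 0" using z K by simp
    then show "(\<rho> x + e) / (1 + K * (\<rho> x + e)) \<le> \<rho> x + e" using z by (simp add: divide_simps)
  qed
  then show "chi K e \<le> 1 + e" using rho_integrable rho_mean by (simp add: prob_space)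
  have "(\<integral>x. \<rho> x + e - K * (\<rho> x + B)^2 / (1 + K * (\<rho> x + B)) \<partial>M) \<le> chi K e" unfolding chi_def
  proof (rule integral_mono[OF _ integrable_chi_integrand[OF K e(1)]])
    show "integrable M (\<lambda>x. \<rho> x + e - K * (\<rho> x + B)^2 / (1 + K * (\<rho> x + B)))"
      using rho_integrable integrable_eta_integrand[OF K B] by simp
    fix x assume x: "x \<in> space M"
    show "\<rho> x + e - K * (\<rho> x + B)^2 / (1 + K * (\<rho> x + B)) \<le> (\<rho> x + e) / (1 + K * (\<rho> x + e))"
      using frac_one_plus_lower_bound[OF K, of "\<rho> x + e" "\<rho> x + B"] rho_pos[OF x] e by simp
  qed
  then show "1 + e - eta K B \<le> chi K e"
    unfolding eta_def using rho_integrable rho_mean integrable_eta_integrand[OF K B] by (simp add: prob_space)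
qed

lemma eta_tendsto_0:
  assumes K0: "\<forall>k. Kk k \<ge> 0" and K: "Kk \<longlonglongrightarrow> 0" and B: "B \<ge> 0"
  shows "(\<lambda>k. eta (Kk k) B) \<longlonglongrightarrow> 0"
proof -
  have "(\<lambda>k. (\<integral>x. Kk k * (\<rho> x + B)^2 / (1 + Kk k * (\<rho> x + B)) \<partial>M)) \<longlonglongrightarrow> (\<integral>x. 0 \<partial>M)"
  proof (rule integral_dominated_convergence[where w="\<lambda>x. \<rho> x + B"])
    show "(\<lambda>x. 0::real) \<in> borel_measurable M" by simp
    show "\<And>k. (\<lambda>x. Kk k * (\<rho> x + B)^2 / (1 + Kk k * (\<rho> x + B))) \<in> borel_measurable M" by measurable
    show "integrable M (\<lambda>x. \<rho> x + B)" using rho_integrable by simp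
    show "AE x in M. (\<lambda>k. Kk k * (\<rho> x + B)^2 / (1 + Kk k * (\<rho> x + B))) \<longlonglongrightarrow> 0"
    proof (rule AE_I2)
      fix x assume x: "x \<in> space M"
      have "(\<lambda>k. Kk k * (\<rho> x + B)^2 / (1 + Kk k * (\<rho> x + B))) \<longlonglongrightarrow> 0 * (\<rho> x + B)^2 / (1 + 0 * (\<rho> x + B))"
        by (intro tendsto_intros K) simp
      then show "(\<lambda>k. Kk k * (\<rho> x + B)^2 / (1 + Kk k * (\<rho> x + B))) \<longlonglongrightarrow> 0" by simp
    qed
    show "AE x in M. norm (Kk k * (\<rho> x + B)^2 / (1 + Kk k * (\<rho> x + B))) \<le> \<rho> x + B" for k
    proof (rule AE_I2)
      fix x assume x: "x \<in> space M"
      have z: "\<rho> x + B > 0" using rho_pos[OF x] B by simp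
      show "norm (Kk k * (\<rho> x + B)^2 / (1 + Kk k * (\<rho> x + B))) \<le> \<rho> x + B"
        using norm_frac_square_le[of "Kk k" "\<rho> x + B"] K0 z by simp
    qed
  qed
  then show ?thesis unfolding eta_def by simp
qed

lemma d_Suc_chi: "d (Suc k) / U k = chi (U k / C k) (d k / U k)"
proof -
  have Ck: "C k > 0" and Uk: "U k > 0" using C_pos U_pos by auto
  have "(\<integral>x. integrand k x \<partial>M) = (\<integral>x. U k * ((\<rho> x + d k / U k) / (1 + U k / C k * (\<rho> x + d k / U k))) \<partial>M)"
  proof (rule Bochner_Integration.integral_cong)
    fix x assume x: "x \<in> space M"
    have z: "U k * \<rho> x + d k > 0" using U_rho_pos[OF x, of k] d_nonneg[of k] by simp
    have e: "\<rho> x + d k / U k = (U k * \<rho> x + d k) / U k" using Uk by (simp add: field_simps)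
    show "integrand k x = U k * ((\<rho> x + d k / U k) / (1 + U k / C k * (\<rho> x + d k / U k)))"
      unfolding integrand_def e using rescale_frac_one_plus_weighted[OF Ck Uk, of "U k * \<rho> x + d k"] z by simp
  qed simp
  also have "\<dots> = U k * chi (U k / C k) (d k / U k)"
    unfolding chi_def by (rule integral_mult_right_zero)
  finally show ?thesis using d_Suc_integral Uk by simp
qed

lemma normalized_d_Suc: "d (Suc k) / C (Suc k) = C k / C (Suc k) * phi (U k / C k) (d k / C k)"
  using d_Suc_phi[of k] C_pos by (simp add: field_simps)

lemma U_div_C_nonneg: "U k / C k \<ge> 0" using U_pos C_pos by (simp add: less_imp_le)
lemma d_div_C_nonneg: "d k / C k \<ge> 0" using d_nonneg C_pos by (simp add: less_imp_le)

lemma U_div_C_at_top: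
  assumes U: "(\<lambda>k. U (Suc k) / U k) \<longlonglongrightarrow> \<mu>" and C: "(\<lambda>k. C (Suc k) / C k) \<longlonglongrightarrow> c"
    and "0 < c" "c < \<mu>"
  shows "filterlim (\<lambda>k. U k / C k) at_top sequentially"
proof (rule filterlim_at_top_ratio_gt_1)
  have "(\<lambda>k. (U (Suc k) / U k) / (C (Suc k) / C k)) \<longlonglongrightarrow> \<mu> / c"
    using assms by (intro tendsto_divide U C) simp
  moreover have "(U (Suc k) / C (Suc k)) / (U k / C k) = (U (Suc k) / U k) / (C (Suc k) / C k)" for k
    using C_pos[of k] U_pos[of k] by (simp add: field_simps)
  ultimately show "(\<lambda>k. (U (Suc k) / C (Suc k)) / (U k / C k)) \<longlonglongrightarrow> \<mu> / c"
    by (simp add: ac_simps)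
  show "\<forall>k. U k / C k > 0" "\<mu> / c > 1" using assms C_pos U_pos by simp_all
qed

lemma tendsto_d_div_C_if_U_dominant:
  assumes r: "(\<lambda>k. C (Suc k) / C k) \<longlonglongrightarrow> c" and c: "c > 0"
    and q: "filterlim (\<lambda>k. U k / C k) at_top sequentially"
  shows "(\<lambda>k. d k / C k) \<longlonglongrightarrow> 1 / c"
proof -
  have c_neq_0: "c \<noteq> 0" using c by simp
  have p: "(\<lambda>k. phi (U k / C k) (d k / C k)) \<longlonglongrightarrow> 1"
  proof (rule tendsto_sandwich[OF _ _ phi_tendsto_1[OF _ q] tendsto_const])
    show "\<forall>k. 0 \<le> U k / C k" using U_div_C_nonneg by simp
    show "eventually (\<lambda>k. phi (U k / C k) 0 \<le> phi (U k / C k) (d k / C k)) sequentially"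
      using phi_mono_right(1)[OF U_div_C_nonneg _ d_div_C_nonneg] by simp
    show "eventually (\<lambda>k. phi (U k / C k) (d k / C k) \<le> 1) sequentially"
      using phi_less_1[OF U_div_C_nonneg d_div_C_nonneg] by (simp add: less_imp_le)
  qed
  have "(\<lambda>k. C k / C (Suc k) * phi (U k / C k) (d k / C k)) \<longlonglongrightarrow> 1 / c * 1"
    by (intro tendsto_mult inverse_ratio_tendsto[OF r c_neq_0] p)
  moreover have "(\<lambda>k. d (Suc k) / C (Suc k)) = (\<lambda>k. C k / C (Suc k) * phi (U k / C k) (d k / C k))"
    by (intro ext) (rule normalized_d_Suc)
  ultimately have "(\<lambda>k. d (Suc k) / C (Suc k)) \<longlonglongrightarrow> 1 / c" by simp
  then show ?thesis by (rule LIMSEQ_imp_Suc)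
qed

lemma d_div_C_bounded:
  assumes r: "(\<lambda>k. C (Suc k) / C k) \<longlonglongrightarrow> c" and c: "c > 0"
  shows "\<exists>B. \<forall>k. d k / C k \<le> B"
proof -
  have c_neq_0: "c \<noteq> 0" using c by simp
  have "Bseq (\<lambda>k. C k / C (Suc k))" using inverse_ratio_tendsto[OF r c_neq_0] by (intro convergent_imp_Bseq) (auto simp: convergent_def)
  then obtain Rb where Rb: "\<forall>k. norm (C k / C (Suc k)) \<le> Rb" by (auto elim: BseqE)
  show ?thesis
  proof (intro exI allI)
    fix k show "d k / C k \<le> max (d 0 / C 0) Rb"
    proof (cases k)
      case 0 then show ?thesis by simp
    next
      case (Suc n)
      have "d (Suc n) / C (Suc n) = C n / C (Suc n) * phi (U n / C n) (d n / C n)" by (rule normalized_d_Suc)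
      also have "\<dots> \<le> C n / C (Suc n) * 1"
        using phi_less_1[OF U_div_C_nonneg d_div_C_nonneg, of n] C_pos by (intro mult_left_mono) (auto simp: less_imp_le)
      also have "\<dots> \<le> Rb" using Rb[rule_format, of n] abs_ge_self[of "C n / C (Suc n)"]
        unfolding real_norm_def by linarith
      finally show ?thesis using Suc by simp
    qed
  qed
qed

lemma phi_lipschitz_left:
  assumes "q \<ge> 0" "K \<ge> 0" "D \<ge> 0"
  shows "\<bar>phi q D - phi K D\<bar> \<le> \<bar>q - K\<bar>"
proof (cases "q \<le> K")
  case True
  then show ?thesis using phi_mono_left[OF assms(1) True assms(3)] by simp
next
  case False
  then have "K \<le> q" by simp
  then show ?thesis using phi_mono_left[OF assms(2) \<open>K \<le> q\<close> assms(3)] by (simp add: abs_le_iff)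
qed

lemma phi_less_beyond_fixpoint:
  assumes K: "K > 0" and c: "c > 0" and xs: "xs > 0" "c * xs = phi K xs" and y: "y > xs"
  shows "phi K y < c * y"
proof -
  define t where "t = y / xs"
  have t: "t > 1" "y = t * xs" unfolding t_def using xs y by (auto simp: field_simps)
  have "phi K (t * xs) + (t - 1) * phi K 0 \<le> t * phi K xs"
    using phi_concave_right[of K xs t] K xs t by simp
  moreover have "(t - 1) * phi K 0 > 0" using t phi_0_right_pos[OF K] by simp
  ultimately have "phi K y < t * phi K xs" using t by simp
  also have "\<dots> = c * y" using xs t by simp
  finally show ?thesis .
qed

lemma phi_greater_below_fixpoint:
  assumes K: "K > 0" and c: "c > 0" and xs: "xs > 0" "c * xs = phi K xs" and y: "0 < y" "y < xs"
  shows "c * y < phi K y"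
proof -
  define t where "t = xs / y"
  have t: "t > 1" "xs = t * y" unfolding t_def using xs y by (auto simp: field_simps)
  have "phi K (t * y) + (t - 1) * phi K 0 \<le> t * phi K y"
    using phi_concave_right[of K y t] K y t by simp
  moreover have "(t - 1) * phi K 0 > 0" using t phi_0_right_pos[OF K] by simp
  ultimately have "t * (c * y) < t * phi K y" using t xs by (simp add: algebra_simps)
  then show ?thesis using t by simp
qed

lemma phi_rescaled:
  assumes "c > 0" "K \<ge> 0" "m \<ge> 0"
  shows "phi K (m / c) = (\<integral>x. (c * K * \<rho> x + m) / (c + (c * K * \<rho> x + m)) \<partial>M)"
  unfolding phi_def
proof (rule Bochner_Integration.integral_cong)
  fix x assume x: "x \<in> space M"
  define y where "y = c * K * \<rho> x + m"
  have y: "y \<ge> 0" unfolding y_def using scaled_rho_nonneg[OF _ x, of "c * K"] assms by simp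
  have "K * \<rho> x + m / c = y / c" "1 + K * \<rho> x + m / c = (c + y) / c"
    unfolding y_def using assms by (simp_all add: field_simps)
  then have "(K * \<rho> x + m / c) / (1 + K * \<rho> x + m / c) = (y / c) / ((c + y) / c)"
    by simp
  also have "\<dots> = y / (c + y)" using assms y by simp
  finally show "(K * \<rho> x + m / c) / (1 + K * \<rho> x + m / c) = (c * K * \<rho> x + m) / (c + (c * K * \<rho> x + m))"
    unfolding y_def .
qed simp

lemma phi_perturbation_tendsto_0:
  assumes q: "(\<lambda>k. U k / C k) \<longlonglongrightarrow> K" and K0: "K \<ge> 0"
  shows "(\<lambda>k. phi (U k / C k) (d k / C k) - phi K (d k / C k)) \<longlonglongrightarrow> 0"
proof (rule tendsto_sandwich[of "\<lambda>k. - \<bar>U k / C k - K\<bar>" _ _ "\<lambda>k. \<bar>U k / C k - K\<bar>"])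
  have ab: "- \<bar>U k / C k - K\<bar> \<le> phi (U k / C k) (d k / C k) - phi K (d k / C k) \<and> phi (U k / C k) (d k / C k) - phi K (d k / C k) \<le> \<bar>U k / C k - K\<bar>" for k
    using phi_lipschitz_left[OF U_div_C_nonneg[of k] K0 d_div_C_nonneg[of k]] by (simp add: abs_le_iff)
  show "eventually (\<lambda>k. - \<bar>U k / C k - K\<bar> \<le> phi (U k / C k) (d k / C k) - phi K (d k / C k)) sequentially"
    using ab by simp
  show "eventually (\<lambda>k. phi (U k / C k) (d k / C k) - phi K (d k / C k) \<le> \<bar>U k / C k - K\<bar>) sequentially"
    using ab by simp
  have "(\<lambda>k. \<bar>U k / C k - K\<bar>) \<longlonglongrightarrow> \<bar>K - K\<bar>" by (intro tendsto_intros q)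
  then show "(\<lambda>k. \<bar>U k / C k - K\<bar>) \<longlonglongrightarrow> 0" by simp
  then show "(\<lambda>k. - \<bar>U k / C k - K\<bar>) \<longlonglongrightarrow> 0" using tendsto_minus by fastforce
qed

lemma continuous_on_phi_right:
  assumes "K \<ge> 0"
  shows "continuous_on {0..} (phi K)"
proof (rule lipschitz_on_continuous_on)
  show "1-lipschitz_on {0..} (phi K)"
    unfolding lipschitz_on_def dist_real_def
  proof (intro conjI ballI)
    fix x y :: real assume "x \<in> {0..}" "y \<in> {0..}"
    then have xy: "x \<ge> 0" "y \<ge> 0" by auto
    show "\<bar>phi K x - phi K y\<bar> \<le> 1 * \<bar>x - y\<bar>"
    proof (cases "x \<le> y")
      case True then show ?thesis using phi_mono_right[OF assms xy(1) True] by simp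
    next
      case False then show ?thesis using phi_mono_right[OF assms xy(2), of x] by simp
    qed
  qed simp
qed

lemma phi_fixpoint_exists:
  assumes K: "K > 0" and c: "c > 0"
  shows "\<exists>x. 0 < x \<and> x < 1 / c \<and> c * x = phi K x"
proof -
  define h where "h x = phi K x - c * x" for x
  have "continuous_on {0..1/c} (phi K)"
    using K by (intro continuous_on_subset[OF continuous_on_phi_right]) auto
  then have "continuous_on {0..1/c} h"
    unfolding h_def by (intro continuous_intros)
  moreover have h0: "h 0 > 0" unfolding h_def using phi_0_right_pos[OF K] by simp
  moreover have h1: "h (1/c) < 0" unfolding h_def using phi_less_1[of K "1/c"] K c by simp
  ultimately obtain x where x: "0 \<le> x" "x \<le> 1/c" "h x = 0"
    using IVT2'[of h "1/c" 0 0] c by auto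
  moreover have "x \<noteq> 0" "x \<noteq> 1/c" using x h0 h1 by auto
  ultimately show ?thesis unfolding h_def by (intro exI[of _ x]) auto
qed

lemma phi_fixpoint_unique:
  assumes K: "K > 0" and c: "c > 0"
    and x: "0 < x" "c * x = phi K x" and y: "0 < y" "c * y = phi K y"
  shows "y = x"
  using phi_less_beyond_fixpoint[OF K c x, of y] phi_greater_below_fixpoint[OF K c x y(1)] y(2)
  by (cases x y rule: linorder_cases) auto

lemma tendsto_d_div_C_fixpoint:
  assumes r: "(\<lambda>k. C (Suc k) / C k) \<longlonglongrightarrow> c" and c: "c > 0"
    and q: "(\<lambda>k. U k / C k) \<longlonglongrightarrow> K" and K: "K > 0"
    and x: "0 < x" "c * x = phi K x"
  shows "(\<lambda>k. d k / C k) \<longlonglongrightarrow> x"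
proof -
  have K0: "K \<ge> 0" and c_neq_0: "c \<noteq> 0" using K c by simp_all
  obtain B where B: "\<forall>k. d k / C k \<le> B" using d_div_C_bounded[OF r c] by blast
  define e where "e k = phi (U k / C k) (d k / C k) - phi K (d k / C k)" for k
  have e: "e \<longlonglongrightarrow> 0"
    unfolding e_def by (rule phi_perturbation_tendsto_0[OF q K0])
  have step: "\<forall>k. d (Suc k) / C (Suc k) = C k / C (Suc k) * (phi K (d k / C k) + e k)"
    using normalized_d_Suc unfolding e_def by simp
  have rpos: "0 \<le> C k / C (Suc k)" for k using C_pos[of k] C_pos[of "Suc k"] by simp
  obtain S where S: "0 \<le> S" "limsup (\<lambda>k. ereal (d k / C k)) = ereal S" "S \<le> 1/c * phi K S"
    using limsup_perturbed_recursion[of "\<lambda>k. d k / C k" B "\<lambda>k. C k / C (Suc k)" "1/c" e "phi K",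
        OF d_div_C_nonneg B[rule_format] inverse_ratio_tendsto[OF r c_neq_0] rpos e _
          phi_mono_right(1)[OF K0] phi_mono_right(2)[OF K0]] step by auto
  obtain I where I: "0 \<le> I" "liminf (\<lambda>k. ereal (d k / C k)) = ereal I" "1/c * phi K I \<le> I"
    using liminf_perturbed_recursion[of "\<lambda>k. d k / C k" B "\<lambda>k. C k / C (Suc k)" "1/c" e "phi K",
        OF d_div_C_nonneg B[rule_format] inverse_ratio_tendsto[OF r c_neq_0] rpos e _
          phi_mono_right(1)[OF K0] phi_mono_right(2)[OF K0]] step by auto
  have "S \<le> x"
  proof (rule ccontr)
    assume "\<not> S \<le> x"
    then have "phi K S < c * S" using phi_less_beyond_fixpoint[OF K c x] by simp
    moreover have "c * S \<le> phi K S" using S(3) c by (simp add: field_simps)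
    ultimately show False by simp
  qed
  moreover have "x \<le> I"
  proof (rule ccontr)
    assume a: "\<not> x \<le> I"
    have "phi K I \<le> c * I" using I(3) c by (simp add: field_simps)
    moreover have "c * I < phi K I"
    proof (cases "I = 0")
      case True then show ?thesis using phi_0_right_pos[OF K] by simp
    next
      case False then show ?thesis using phi_greater_below_fixpoint[OF K c x, of I] I(1) a by simp
    qed
    ultimately show False by simp
  qed
  ultimately show ?thesis
    by (intro limsup_le_liminf_real) (use S(2) I(2) in auto)
qed

lemma tendsto_d_div_C_if_U_negligible:
  assumes r: "(\<lambda>k. C (Suc k) / C k) \<longlonglongrightarrow> c" and c: "c > 0" "c < 1"
    and q: "(\<lambda>k. U k / C k) \<longlonglongrightarrow> 0"
  shows "(\<lambda>k. d k / C k) \<longlonglongrightarrow> (1 - c) / c"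
proof -
  have c_neq_0: "c \<noteq> 0" using c by simp
  define D where "D k = d k / C k" for k
  define r' where "r' k = C k / C (Suc k)" for k
  have D0: "0 \<le> D k" for k unfolding D_def using d_div_C_nonneg by simp
  obtain B where B: "\<forall>k. D k \<le> B" using d_div_C_bounded[OF r c(1)] unfolding D_def by blast
  define e where "e k = phi (U k / C k) (D k) - phi 0 (D k)" for k
  have e: "e \<longlonglongrightarrow> 0" unfolding e_def D_def using phi_perturbation_tendsto_0[OF q] by simp
  have step: "\<forall>k. D (Suc k) = r' k * (phi 0 (D k) + e k)"
    using normalized_d_Suc unfolding e_def D_def r'_def by simp
  have rl: "r' \<longlonglongrightarrow> 1/c" unfolding r'_def by (rule inverse_ratio_tendsto[OF r c_neq_0])
  have rpos: "0 \<le> r' k" for k unfolding r'_def using C_pos[of k] C_pos[of "Suc k"] by simp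
  obtain S where S: "0 \<le> S" "limsup (\<lambda>k. ereal (D k)) = ereal S" "S \<le> 1/c * phi 0 S"
    using limsup_perturbed_recursion[of D B r' "1/c" e "phi 0",
        OF D0 B[rule_format] rl rpos e _ phi_mono_right(1)[OF order_refl] phi_mono_right(2)[OF order_refl]] step by auto
  obtain I where I: "0 \<le> I" "liminf (\<lambda>k. ereal (D k)) = ereal I" "1/c * phi 0 I \<le> I"
    using liminf_perturbed_recursion[of D B r' "1/c" e "phi 0",
        OF D0 B[rule_format] rl rpos e _ phi_mono_right(1)[OF order_refl] phi_mono_right(2)[OF order_refl]] step by auto
  \<comment> \<open>Besides \<open>(1 - c) / c\<close>, also \<open>0\<close> is a fixed point of \<open>D \<mapsto> D / (c (1 + D))\<close>; it is
    repelling because \<open>1 / c > 1\<close>, which keeps the liminf away from it.\<close>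
  define \<theta> where "\<theta> = (1 + 1/c) / 2"
  have \<theta>: "1 < \<theta>" "\<theta> < 1/c" unfolding \<theta>_def using c by (auto simp: field_simps)
  obtain N where N: "\<forall>k\<ge>N. \<theta> < r' k"
    using order_tendstoD(1)[OF rl \<theta>(2)] by (auto simp: eventually_sequentially)
  have low: "\<theta> * (D k / (1 + D k)) \<le> D (Suc k)" if "k \<ge> Suc N" for k
  proof -
    have "\<theta> * (D k / (1 + D k)) \<le> r' k * (D k / (1 + D k))"
      using N that D0 by (intro mult_right_mono) (auto intro: less_imp_le)
    also have "\<dots> \<le> r' k * phi (U k / C k) (D k)"
      using phi_ge_frac[OF U_div_C_nonneg D0] rpos by (intro mult_left_mono) auto
    also have "\<dots> = D (Suc k)" unfolding D_def r'_def by (rule normalized_d_Suc[symmetric])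
    finally show ?thesis .
  qed
  have "D (Suc N) > 0" unfolding D_def using d_Suc_pos C_pos by simp
  from bounded_away_from_0_if_repelling[where D = D and N = "Suc N", OF D0 \<theta>(1) low this]
  obtain m where m: "m > 0" "\<forall>k\<ge>Suc N. m \<le> D k" by blast
  then have "eventually (\<lambda>k. ereal m \<le> ereal (D k)) sequentially"
    unfolding eventually_sequentially by auto
  then have "ereal m \<le> liminf (\<lambda>k. ereal (D k))" by (rule Liminf_bounded)
  then have Ipos: "I > 0" using I(2) m(1) by simp
  have "(1 - c) / c \<le> I"
    using I(3) frac_one_plus_div_le_iff[OF c(1) Ipos] unfolding phi_0_left by blast
  moreover have "S \<le> (1 - c) / c"
  proof (cases "S = 0")
    case True then show ?thesis using c by simp
  next
    case False
    then show ?thesis using S(1,3) le_frac_one_plus_div_iff[of c S] c unfolding phi_0_left by auto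
  qed
  ultimately have "D \<longlonglongrightarrow> (1 - c) / c"
    by (intro limsup_le_liminf_real) (use S(2) I(2) in auto)
  then show ?thesis unfolding D_def .
qed
lemma normalized_U_d_Suc: "d (Suc k) / U (Suc k) = U k / U (Suc k) * chi (U k / C k) (d k / U k)"
  using d_Suc_chi[of k] U_pos[of k] U_pos[of "Suc k"] by (simp add: field_simps)

lemma d_div_U_Suc_le: "d (Suc k) / U (Suc k) \<le> U k / U (Suc k) * (1 + d k / U k)"
  unfolding normalized_U_d_Suc
  using chi_bounds(1)[OF U_div_C_nonneg _ order_refl, of "d k / U k" k] d_nonneg[of k]
    U_pos[of k] U_pos[of "Suc k"]
  by (intro mult_left_mono) auto

lemma d_div_U_bounded:
  assumes s: "(\<lambda>k. U (Suc k) / U k) \<longlonglongrightarrow> \<mu>" and mu: "\<mu> > 1"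
  shows "\<exists>B\<ge>0. \<forall>k. d k / U k \<le> B"
proof -
  have "Bseq (\<lambda>k. U k / U (Suc k))"
    using inverse_ratio_tendsto[OF s] mu by (intro convergent_imp_Bseq) (auto simp: convergent_def)
  then obtain R where R: "\<forall>k. norm (U k / U (Suc k)) \<le> R" by (auto elim: BseqE)
  have "\<forall>k. d (Suc k) / U (Suc k) \<le> U k / U (Suc k) * (d k / U k) + R"
  proof
    fix k
    have "U k / U (Suc k) \<le> R" using R[rule_format, of k] U_pos[of k] U_pos[of "Suc k"] by simp
    then show "d (Suc k) / U (Suc k) \<le> U k / U (Suc k) * (d k / U k) + R"
      using d_div_U_Suc_le[of k] by (simp add: algebra_simps)
  qed
  moreover have "R \<ge> 0" using R[rule_format, of 0] norm_ge_zero order_trans by blast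
  ultimately obtain B where "\<forall>k. d k / U k \<le> B"
    using affine_recursion_bounded[of "\<lambda>k. d k / U k" "\<lambda>k. U k / U (Suc k)" R "1 / \<mu>"]
      inverse_ratio_tendsto[OF s] mu d_nonneg U_pos by (force simp: less_imp_le)
  moreover have "0 \<le> d 0 / U 0" using d_nonneg[of 0] U_pos[of 0] by simp
  ultimately show ?thesis by (meson order_trans)
qed

lemma tendsto_d_div_U:
  assumes s: "(\<lambda>k. U (Suc k) / U k) \<longlonglongrightarrow> \<mu>" and mu: "\<mu> > 1"
    and q: "(\<lambda>k. U k / C k) \<longlonglongrightarrow> 0"
  shows "(\<lambda>k. d k / U k) \<longlonglongrightarrow> 1 / (\<mu> - 1)"
proof -
  define E where "E k = d k / U k" for k
  define sr where "sr k = U k / U (Suc k)" for k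
  have E0: "\<forall>k. 0 \<le> E k" unfolding E_def using d_nonneg U_pos by (simp add: less_imp_le)
  have srl: "sr \<longlonglongrightarrow> 1 / \<mu>"
    unfolding sr_def using inverse_ratio_tendsto[OF s] mu by simp
  have srpos: "\<forall>k. 0 \<le> sr k" unfolding sr_def using U_pos by (simp add: less_imp_le)
  have up: "E (Suc k) \<le> sr k * (1 + E k)" for k
    unfolding E_def sr_def using d_div_U_Suc_le by simp
  obtain B where B: "\<forall>k. E k \<le> B" "B \<ge> 0" using d_div_U_bounded[OF s mu] unfolding E_def by blast
  have low: "sr k * ((1 + E k) + - eta (U k / C k) B) \<le> E (Suc k)" for k
  proof -
    have "1 + E k - eta (U k / C k) B \<le> chi (U k / C k) (E k)"
      using chi_bounds(2)[OF U_div_C_nonneg E0[rule_format] B(1)[rule_format]] .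
    then have "sr k * ((1 + E k) + - eta (U k / C k) B) \<le> sr k * chi (U k / C k) (E k)"
      using srpos by (intro mult_left_mono) auto
    also have "\<dots> = E (Suc k)" unfolding E_def sr_def by (rule normalized_U_d_Suc[symmetric])
    finally show ?thesis .
  qed
  have etal: "(\<lambda>k. - eta (U k / C k) B) \<longlonglongrightarrow> 0"
    using tendsto_minus[OF eta_tendsto_0[OF _ q B(2)]] U_div_C_nonneg by simp
  have mono1: "1 + x \<le> 1 + y" and lip1: "1 + y \<le> (1 + x) + (y - x)" if "x \<le> y" for x y :: real
    using that by simp_all
  obtain S where S: "0 \<le> S" "limsup (\<lambda>k. ereal (E k)) = ereal S" "S \<le> 1/\<mu> * (1 + S)"
    using limsup_perturbed_recursion[of E B sr "1/\<mu>" "\<lambda>_. 0" "\<lambda>x. 1 + x",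
        OF E0[rule_format] B(1)[rule_format] srl srpos[rule_format] _ _ mono1 lip1] up
    by auto
  obtain I where I: "0 \<le> I" "liminf (\<lambda>k. ereal (E k)) = ereal I" "1/\<mu> * (1 + I) \<le> I"
    using liminf_perturbed_recursion[of E B sr "1/\<mu>" "\<lambda>k. - eta (U k / C k) B" "\<lambda>x. 1 + x",
        OF E0[rule_format] B(1)[rule_format] srl srpos[rule_format] etal _ mono1 lip1] low
    by auto
  have Sle: "S \<le> 1 / (\<mu> - 1)"
  proof -
    have "\<mu> * S \<le> 1 + S" using S(3) mu by (simp add: field_simps)
    then have "(\<mu> - 1) * S \<le> 1" by (simp add: algebra_simps)
    then show ?thesis using mu by (simp add: field_simps)
  qed
  have Ige: "1 / (\<mu> - 1) \<le> I"
  proof -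
    have "1 + I \<le> \<mu> * I" using I(3) mu by (simp add: field_simps)
    then have "1 \<le> (\<mu> - 1) * I" by (simp add: algebra_simps)
    then show ?thesis using mu by (simp add: field_simps)
  qed
  have "E \<longlonglongrightarrow> 1 / (\<mu> - 1)"
    by (rule limsup_le_liminf_real) (use S(2) I(2) Sle Ige in auto)
  then show ?thesis unfolding E_def .
qed

definition \<sigma> :: "nat \<Rightarrow> real" where
  "\<sigma> = (\<lambda>k. \<Sum>l<k. 1 / C l)"

lemma \<sigma>_Suc: "\<sigma> (Suc k) = \<sigma> k + 1 / C k"
  unfolding \<sigma>_def by simp

lemma \<sigma>_less_Suc: "\<sigma> k < \<sigma> (Suc k)"
  using C_pos[of k] by (simp add: \<sigma>_Suc)

lemma \<sigma>_1_pos: "\<sigma> 1 > 0"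
  using C_pos[of 0] by (simp add: \<sigma>_def)

lemma \<sigma>_1_le: "\<sigma> 1 \<le> \<sigma> (Suc k)"
  using lift_Suc_mono_le[of \<sigma>, OF less_imp_le[OF \<sigma>_less_Suc]] by simp

lemma inverse_d_upper: "1 / d (Suc n) \<le> 1 / d 1 + \<sigma> (Suc n) - \<sigma> 1"
proof (induction n)
  case 0 then show ?case by simp
next
  case (Suc n)
  have "1 / d (Suc (Suc n)) \<le> 1 / d (Suc n) + 1 / C (Suc n)"
    using inverse_parallel_le[OF C_pos d_Suc_pos d_Suc_ge[of "Suc n"]] .
  then show ?case using Suc \<sigma>_Suc[of "Suc n"] by simp
qed

lemma inverse_d_lower:
  "1 / d 1 + \<sigma> (Suc n) - \<sigma> 1 - (\<Sum>l<Suc n. U l * (1 / d 1 + \<sigma> (Suc l))\<^sup>2) \<le> 1 / d (Suc n)"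
proof (induction n)
  case 0 then show ?case using U_pos[of 0] by simp
next
  case (Suc n)
  define y where "y = 1 / d (Suc n) + 1 / C (Suc n)"
  have "y - U (Suc n) * y\<^sup>2 \<le> 1 / d (Suc (Suc n))"
    unfolding y_def
    using inverse_parallel_perturbed_ge[OF C_pos d_Suc_pos less_imp_le[OF U_pos] d_Suc_le d_Suc_pos] .
  moreover have "0 \<le> y" "y \<le> 1 / d 1 + \<sigma> (Suc (Suc n))"
    using inverse_d_upper[of n] \<sigma>_Suc[of "Suc n"] \<sigma>_1_pos d_Suc_pos[of n] C_pos[of "Suc n"]
    unfolding y_def by (auto simp: less_imp_le)
  then have "U (Suc n) * y\<^sup>2 \<le> U (Suc n) * (1 / d 1 + \<sigma> (Suc (Suc n)))\<^sup>2"
    using U_pos[of "Suc n"] by (intro mult_left_mono power_mono) auto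
  ultimately show ?case using Suc \<sigma>_Suc[of "Suc n"] unfolding y_def by simp
qed

lemma quadratic_error_negligible:
  assumes sig: "filterlim \<sigma> at_top sequentially"
    and z: "(\<lambda>k. U k * C k * (\<sigma> (Suc k))\<^sup>2) \<longlonglongrightarrow> 0"
  shows "(\<lambda>k. (\<Sum>l<k. U l * (A + \<sigma> (Suc l))\<^sup>2) / \<sigma> k) \<longlonglongrightarrow> 0"
proof (rule stolz_cesaro_zero)
  show "\<forall>l. 0 \<le> U l * (A + \<sigma> (Suc l))\<^sup>2" using U_pos by (simp add: less_imp_le)
  show "\<forall>k. \<sigma> k < \<sigma> (Suc k)" using \<sigma>_less_Suc by blast
  show "filterlim \<sigma> at_top sequentially" by (fact sig)
  define K where "K = 2 * A\<^sup>2 / (\<sigma> 1)\<^sup>2 + 2"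
  have bound: "U k * (A + \<sigma> (Suc k))\<^sup>2 / (\<sigma> (Suc k) - \<sigma> k) \<le> K * (U k * C k * (\<sigma> (Suc k))\<^sup>2)" for k
  proof -
    have "0 \<le> (A - \<sigma> (Suc k))\<^sup>2" by simp
    then have "(A + \<sigma> (Suc k))\<^sup>2 \<le> 2 * A\<^sup>2 + 2 * (\<sigma> (Suc k))\<^sup>2"
      by (simp add: power2_eq_square algebra_simps)
    also have "\<dots> \<le> K * (\<sigma> (Suc k))\<^sup>2"
    proof -
      have "(\<sigma> 1)\<^sup>2 \<le> (\<sigma> (Suc k))\<^sup>2" using \<sigma>_1_le[of k] \<sigma>_1_pos by (intro power_mono) auto
      then have "2 * A\<^sup>2 * 1 \<le> 2 * A\<^sup>2 * ((\<sigma> (Suc k))\<^sup>2 / (\<sigma> 1)\<^sup>2)"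
        using \<sigma>_1_pos by (intro mult_left_mono) auto
      then show ?thesis unfolding K_def by (simp add: algebra_simps)
    qed
    finally have "U k * C k * (A + \<sigma> (Suc k))\<^sup>2 \<le> U k * C k * (K * (\<sigma> (Suc k))\<^sup>2)"
      using C_pos[of k] U_pos[of k] by (intro mult_left_mono) auto
    then show ?thesis using C_pos[of k] by (simp add: \<sigma>_Suc mult_ac)
  qed
  show "(\<lambda>k. U k * (A + \<sigma> (Suc k))\<^sup>2 / (\<sigma> (Suc k) - \<sigma> k)) \<longlonglongrightarrow> 0"
  proof (rule tendsto_sandwich[of "\<lambda>_. 0" _ _ "\<lambda>k. K * (U k * C k * (\<sigma> (Suc k))\<^sup>2)"])
    show "eventually (\<lambda>k. 0 \<le> U k * (A + \<sigma> (Suc k))\<^sup>2 / (\<sigma> (Suc k) - \<sigma> k)) sequentially"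
      using U_pos \<sigma>_less_Suc by (simp add: less_imp_le)
    show "eventually (\<lambda>k. U k * (A + \<sigma> (Suc k))\<^sup>2 / (\<sigma> (Suc k) - \<sigma> k)
        \<le> K * (U k * C k * (\<sigma> (Suc k))\<^sup>2)) sequentially"
      using bound by simp
    show "(\<lambda>k. K * (U k * C k * (\<sigma> (Suc k))\<^sup>2)) \<longlonglongrightarrow> 0"
      using tendsto_mult_right_zero[OF z, of K] by simp
  qed simp
qed

lemma tendsto_\<sigma>_mult_d:
  assumes sig: "filterlim \<sigma> at_top sequentially"
    and z: "(\<lambda>k. U k * C k * (\<sigma> (Suc k))\<^sup>2) \<longlonglongrightarrow> 0"
  shows "(\<lambda>k. \<sigma> k * d k) \<longlonglongrightarrow> 1"
proof -
  define A where "A = 1 / d 1"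
  define E where "E n = (\<Sum>l<Suc n. U l * (A + \<sigma> (Suc l))\<^sup>2)" for n
  have \<sigma>_pos: "\<sigma> (Suc n) > 0" for n using \<sigma>_1_le[of n] \<sigma>_1_pos by simp
  have "filterlim (\<lambda>n. \<sigma> (Suc n)) at_top sequentially"
    using sig by (simp add: filterlim_sequentially_Suc)
  then have shift: "(\<lambda>n. (A - \<sigma> 1) / \<sigma> (Suc n)) \<longlonglongrightarrow> 0"
    by (intro tendsto_divide_0[OF tendsto_const] filterlim_at_top_imp_at_infinity)
  have err: "(\<lambda>n. E n / \<sigma> (Suc n)) \<longlonglongrightarrow> 0"
    unfolding E_def using LIMSEQ_Suc[OF quadratic_error_negligible[OF sig z, of A]] .
  have "(\<lambda>n. (1 / d (Suc n)) / \<sigma> (Suc n)) \<longlonglongrightarrow> 1"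
  proof (rule tendsto_sandwich[of "\<lambda>n. 1 + (A - \<sigma> 1) / \<sigma> (Suc n) - E n / \<sigma> (Suc n)" _ _
        "\<lambda>n. 1 + (A - \<sigma> 1) / \<sigma> (Suc n)"])
    show "eventually (\<lambda>n. 1 + (A - \<sigma> 1) / \<sigma> (Suc n) - E n / \<sigma> (Suc n)
          \<le> (1 / d (Suc n)) / \<sigma> (Suc n)) sequentially"
    proof (rule always_eventually, rule allI)
      fix n
      have "1 + (A - \<sigma> 1) / \<sigma> (Suc n) - E n / \<sigma> (Suc n) = (A + \<sigma> (Suc n) - \<sigma> 1 - E n) / \<sigma> (Suc n)"
        using \<sigma>_pos[of n] by (simp add: field_simps)
      also have "\<dots> \<le> (1 / d (Suc n)) / \<sigma> (Suc n)"
        by (rule divide_right_mono) (use inverse_d_lower[of n] \<sigma>_pos[of n] in \<open>simp_all add: A_def E_def\<close>)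
      finally show "1 + (A - \<sigma> 1) / \<sigma> (Suc n) - E n / \<sigma> (Suc n) \<le> (1 / d (Suc n)) / \<sigma> (Suc n)" .
    qed
    show "eventually (\<lambda>n. (1 / d (Suc n)) / \<sigma> (Suc n) \<le> 1 + (A - \<sigma> 1) / \<sigma> (Suc n)) sequentially"
    proof (rule always_eventually, rule allI)
      fix n
      have "(1 / d (Suc n)) / \<sigma> (Suc n) \<le> (A + \<sigma> (Suc n) - \<sigma> 1) / \<sigma> (Suc n)"
        by (rule divide_right_mono) (use inverse_d_upper[of n] \<sigma>_pos[of n] in \<open>simp_all add: A_def\<close>)
      also have "\<dots> = 1 + (A - \<sigma> 1) / \<sigma> (Suc n)" using \<sigma>_pos[of n] by (simp add: field_simps)
      finally show "(1 / d (Suc n)) / \<sigma> (Suc n) \<le> 1 + (A - \<sigma> 1) / \<sigma> (Suc n)" .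
    qed
    show "(\<lambda>n. 1 + (A - \<sigma> 1) / \<sigma> (Suc n) - E n / \<sigma> (Suc n)) \<longlonglongrightarrow> 1"
      using tendsto_diff[OF tendsto_add[OF tendsto_const shift] err, of 1] by simp
    show "(\<lambda>n. 1 + (A - \<sigma> 1) / \<sigma> (Suc n)) \<longlonglongrightarrow> 1"
      using tendsto_add[OF tendsto_const shift, of 1] by simp
  qed
  then have "(\<lambda>n. inverse ((1 / d (Suc n)) / \<sigma> (Suc n))) \<longlonglongrightarrow> inverse 1"
    by (intro tendsto_inverse) simp_all
  then have "(\<lambda>n. \<sigma> (Suc n) * d (Suc n)) \<longlonglongrightarrow> 1"
    by (simp add: mult.commute)
  then show ?thesis by (rule LIMSEQ_imp_Suc)
qed

end

section \<open>Regularly varying scales\<close>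

locale regularly_varying_recursion =
  fixes M :: "'a measure" and \<rho> :: "'a \<Rightarrow> real"
    and c \<mu> a b :: real and cbar \<mu>bar :: "nat \<Rightarrow> real"
    and Lc L\<mu> :: "real \<Rightarrow> real" and d :: "nat \<Rightarrow> real" and Kbar :: ereal
  assumes prob_space_M: "prob_space M"
    and \<rho>_measurable: "\<rho> \<in> borel_measurable M"
    and \<rho>_positive: "\<forall>x\<in>space M. \<rho> x > 0"
    and \<rho>_integrable: "integrable M \<rho>" and \<rho>_mean: "(\<integral>x. \<rho> x \<partial>M) = 1"
    and c_pos: "c > 0" and \<mu>_pos: "\<mu> > 0"
    and cbar_pos: "\<forall>k. cbar k > 0" and \<mu>bar_pos: "\<forall>k. \<mu>bar k > 0"
    and Lc_slowly_varying: "slowly_varying Lc" and L\<mu>_slowly_varying: "slowly_varying L\<mu>"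
    and cbar_asymp: "cbar \<sim>[sequentially] (\<lambda>k. Lc (real k) * real k powr a)"
    and \<mu>bar_asymp: "\<mu>bar \<sim>[sequentially] (\<lambda>k. L\<mu> (real k) * real k powr b)"
    and Kbar_limit: "(\<lambda>k. ereal (\<mu>bar k / cbar k)) \<longlonglongrightarrow> Kbar"
    and d_init_nonneg: "d 0 \<ge> 0"
    and d_recursion: "\<forall>k. d (Suc k) = (\<integral>x. (c ^ k * cbar k) * ((\<mu> ^ k * \<mu>bar k) * \<rho> x + d k)
                 / ((c ^ k * cbar k) + ((\<mu> ^ k * \<mu>bar k) * \<rho> x + d k)) \<partial>M)"
begin

sublocale harmonic_recursion M \<rho> "\<lambda>k. c ^ k * cbar k" "\<lambda>k. \<mu> ^ k * \<mu>bar k" d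
proof (rule harmonic_recursion.intro)
  show "c ^ k * cbar k > 0" "\<mu> ^ k * \<mu>bar k > 0" for k
    using c_pos \<mu>_pos cbar_pos \<mu>bar_pos by simp_all
  show "\<rho> x > 0" if "x \<in> space M" for x
    using \<rho>_positive that by blast
qed (fact prob_space_M \<rho>_measurable \<rho>_integrable \<rho>_mean d_init_nonneg d_recursion)+

lemma C_Suc_ratio: "(\<lambda>k. c ^ Suc k * cbar (Suc k) / (c ^ k * cbar k)) \<longlonglongrightarrow> c"
  using geometric_times_Suc_ratio[OF cbar_pos
      regularly_varying_Suc_ratio[OF Lc_slowly_varying cbar_pos cbar_asymp]] .

lemma U_Suc_ratio: "(\<lambda>k. \<mu> ^ Suc k * \<mu>bar (Suc k) / (\<mu> ^ k * \<mu>bar k)) \<longlonglongrightarrow> \<mu>"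
  using geometric_times_Suc_ratio[OF \<mu>bar_pos
      regularly_varying_Suc_ratio[OF L\<mu>_slowly_varying \<mu>bar_pos \<mu>bar_asymp]] .

lemma U_div_C_eq: "\<mu> ^ k * \<mu>bar k / (c ^ k * cbar k) = (\<mu> / c) ^ k * (\<mu>bar k / cbar k)"
  by (simp add: power_divide)

lemma U_div_C_tendsto_if_c_eq_\<mu>:
  assumes "c = \<mu>" and "Kbar = ereal K"
  shows "(\<lambda>k. \<mu> ^ k * \<mu>bar k / (c ^ k * cbar k)) \<longlonglongrightarrow> K"
  using Kbar_limit assms c_pos by (simp add: U_div_C_eq)

lemma regime_A:
  assumes "c < \<mu> \<or> (c = \<mu> \<and> Kbar = \<infinity>)"
  shows "(\<lambda>k. d k / (c ^ k * cbar k)) \<longlonglongrightarrow> 1 / c"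
proof -
  have "filterlim (\<lambda>k. \<mu> ^ k * \<mu>bar k / (c ^ k * cbar k)) at_top sequentially"
  proof (cases "c < \<mu>")
    case True
    then show ?thesis using U_div_C_at_top[OF U_Suc_ratio C_Suc_ratio c_pos] by simp
  next
    case False
    then have "c = \<mu>" "Kbar = \<infinity>" using assms by auto
    then have "filterlim (\<lambda>k. \<mu>bar k / cbar k) at_top sequentially"
      using Kbar_limit tendsto_PInfty_eq_at_top by blast
    then show ?thesis using \<open>c = \<mu>\<close> c_pos by (simp add: U_div_C_eq)
  qed
  then show ?thesis using tendsto_d_div_C_if_U_dominant[OF C_Suc_ratio c_pos] by simp
qed

lemma regime_B:
  assumes "c = \<mu> \<and> 0 < Kbar \<and> Kbar < \<infinity>"
  shows "\<exists>Mb. 0 < Mb \<and> Mb < 1 \<and>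
           Mb = (\<integral>x. (c * real_of_ereal Kbar * \<rho> x + Mb)
                     / (c + (c * real_of_ereal Kbar * \<rho> x + Mb)) \<partial>M) \<and>
           (\<forall>M'. 0 < M' \<and> M' < 1 \<and>
              M' = (\<integral>x. (c * real_of_ereal Kbar * \<rho> x + M')
                     / (c + (c * real_of_ereal Kbar * \<rho> x + M')) \<partial>M) \<longrightarrow> M' = Mb) \<and>
           (\<lambda>k. d k / (c ^ k * cbar k)) \<longlonglongrightarrow> Mb / c"
proof -
  obtain K where K: "Kbar = ereal K" "K > 0" using assms by (cases Kbar) auto
  have q: "(\<lambda>k. \<mu> ^ k * \<mu>bar k / (c ^ k * cbar k)) \<longlonglongrightarrow> K"
    using U_div_C_tendsto_if_c_eq_\<mu> assms K(1) by blast
  obtain x where x: "0 < x" "x < 1 / c" "c * x = phi K x"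
    using phi_fixpoint_exists[OF K(2) c_pos] by blast
  have fixpoint: "phi K (m / c) = (\<integral>x. (c * real_of_ereal Kbar * \<rho> x + m)
                     / (c + (c * real_of_ereal Kbar * \<rho> x + m)) \<partial>M)" if "m > 0" for m
    using phi_rescaled[OF c_pos, of K m] K that by simp
  have cx: "c * x / c = x" using c_pos by simp
  show ?thesis
  proof (intro exI conjI allI impI)
    show "0 < c * x" "c * x < 1" using x(1,2) c_pos by (simp_all add: field_simps)
    have "c * x = phi K (c * x / c)" unfolding cx by (rule x(3))
    also have "\<dots> = (\<integral>y. (c * real_of_ereal Kbar * \<rho> y + c * x)
                     / (c + (c * real_of_ereal Kbar * \<rho> y + c * x)) \<partial>M)"
      by (rule fixpoint) (use x(1) c_pos in simp)
    finally show "c * x = (\<integral>y. (c * real_of_ereal Kbar * \<rho> y + c * x)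
                     / (c + (c * real_of_ereal Kbar * \<rho> y + c * x)) \<partial>M)" .
    show "(\<lambda>k. d k / (c ^ k * cbar k)) \<longlonglongrightarrow> c * x / c"
      unfolding cx by (rule tendsto_d_div_C_fixpoint[OF C_Suc_ratio c_pos q K(2) x(1,3)])
    fix M' assume M': "0 < M' \<and> M' < 1 \<and> M' = (\<integral>y. (c * real_of_ereal Kbar * \<rho> y + M')
                     / (c + (c * real_of_ereal Kbar * \<rho> y + M')) \<partial>M)"
    then have M'_pos: "0 < M'" by blast
    have "c * (M' / c) = M'" using c_pos by simp
    also have "\<dots> = phi K (M' / c)" using M' fixpoint[OF M'_pos] by metis
    finally have "M' / c = x"
      using phi_fixpoint_unique[OF K(2) c_pos x(1) x(3), of "M' / c"] M'_pos c_pos by simp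
    then show "M' = c * x" using c_pos by (simp add: field_simps)
  qed
qed

lemma regime_C1:
  assumes "c = \<mu> \<and> c < 1 \<and> Kbar = 0"
  shows "(\<lambda>k. d k / (c ^ k * cbar k)) \<longlonglongrightarrow> (1 - c) / c"
  using tendsto_d_div_C_if_U_negligible[OF C_Suc_ratio c_pos _ U_div_C_tendsto_if_c_eq_\<mu>] assms
  by (simp add: zero_ereal_def)

lemma regime_C2:
  assumes "c = \<mu> \<and> c > 1 \<and> Kbar = 0 \<and> \<not> summable (\<lambda>k. \<mu>bar k / cbar k)"
  shows "(\<lambda>k. d k / (\<mu> ^ k * \<mu>bar k)) \<longlonglongrightarrow> 1 / (\<mu> - 1)"
  using tendsto_d_div_U[OF U_Suc_ratio _ U_div_C_tendsto_if_c_eq_\<mu>] assms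
  by (simp add: zero_ereal_def)

lemma \<sigma>_at_top:
  assumes "c < 1 \<or> (c = 1 \<and> a < 1)"
  shows "filterlim \<sigma> at_top sequentially"
proof (cases "c < 1")
  case True
  have "(\<lambda>k. (1 / (c ^ Suc k * cbar (Suc k))) / (1 / (c ^ k * cbar k))) \<longlonglongrightarrow> 1 / c"
    using inverse_ratio_tendsto[OF C_Suc_ratio] c_pos by simp
  moreover have "1 / c > 1" using True c_pos by (simp add: field_simps)
  ultimately have "filterlim (\<lambda>k. 1 / (c ^ k * cbar k)) at_top sequentially"
    using C_pos by (intro filterlim_at_top_ratio_gt_1) simp_all
  moreover have "1 / (c ^ k * cbar k) \<le> (\<Sum>l<Suc k. 1 / (c ^ l * cbar l))" for k
  proof -
    have "0 \<le> (\<Sum>l<k. 1 / (c ^ l * cbar l))"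
      using C_pos by (intro sum_nonneg) (simp add: less_imp_le)
    then show ?thesis by simp
  qed
  ultimately have "filterlim (\<lambda>k. \<Sum>l<Suc k. 1 / (c ^ l * cbar l)) at_top sequentially"
    by (auto intro: filterlim_at_top_mono)
  then show ?thesis
    unfolding \<sigma>_def using filterlim_sequentially_Suc[of "\<lambda>k. \<Sum>l<k. 1 / (c ^ l * cbar l)"] by blast
next
  case False
  then have "c = 1" "a < 1" using assms by auto
  then show ?thesis unfolding \<sigma>_def
    using partial_sums_at_top_if_not_summable[of "\<lambda>k. 1 / cbar k"] cbar_pos
      regularly_varying_inverse_not_summable[OF Lc_slowly_varying cbar_pos cbar_asymp]
    by (simp add: less_imp_le)
qed

lemma U_C_\<sigma>_square_tendsto_0:
  assumes "\<mu> < c" "c \<le> 1" "Kbar = 0"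
  shows "(\<lambda>k. \<mu> ^ k * \<mu>bar k * (c ^ k * cbar k) * (\<sigma> (Suc k))\<^sup>2) \<longlonglongrightarrow> 0"
proof -
  define \<theta> where "\<theta> = sqrt ((1 + c / \<mu>) / 2)"
  have "c / \<mu> > 1" using assms \<mu>_pos by simp
  then have \<theta>: "\<theta>\<^sup>2 = (1 + c / \<mu>) / 2" "\<theta> > 1" unfolding \<theta>_def by auto
  have "\<bar>\<mu> / c * \<theta>\<^sup>2\<bar> < 1"
    using assms \<mu>_pos c_pos \<theta>(1) by (simp add: field_simps)
  moreover have "(\<lambda>k. \<mu>bar k / cbar k) \<longlonglongrightarrow> 0"
    using Kbar_limit assms(3) by (simp add: zero_ereal_def)
  ultimately have "(\<lambda>k. \<mu>bar k / cbar k * (\<mu> / c * \<theta>\<^sup>2) ^ k) \<longlonglongrightarrow> 0 * 0"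
    by (intro tendsto_mult LIMSEQ_power_zero) simp_all
  moreover have "\<mu> ^ k * \<mu>bar k / (c ^ k * cbar k) * (\<theta>\<^sup>2) ^ k = \<mu>bar k / cbar k * (\<mu> / c * \<theta>\<^sup>2) ^ k" for k
    unfolding U_div_C_eq power_mult_distrib by (simp only: ac_simps)
  ultimately have "(\<lambda>k. \<mu> ^ k * \<mu>bar k / (c ^ k * cbar k) * (\<theta>\<^sup>2) ^ k) \<longlonglongrightarrow> 0"
    by simp
  then show ?thesis
    using weighted_square_partial_sums_tendsto_0[OF _ _ C_Suc_ratio, of "\<lambda>k. \<mu> ^ k * \<mu>bar k" \<theta>]
      C_pos U_pos assms \<theta>(2) by (simp add: \<sigma>_def less_imp_le)
qed

lemma regime_C3:
  assumes "(1 > c \<and> c > \<mu> \<and> Kbar = 0) \<or> (c = 1 \<and> c > \<mu> \<and> Kbar = 0 \<and> a < 1)"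
  shows "(\<lambda>k. (\<Sum>l<k. 1 / (c ^ l * cbar l)) * d k) \<longlonglongrightarrow> 1"
proof -
  have "c < 1 \<or> (c = 1 \<and> a < 1)" "\<mu> < c" "c \<le> 1" "Kbar = 0" using assms by auto
  from tendsto_\<sigma>_mult_d[OF \<sigma>_at_top[OF this(1)] U_C_\<sigma>_square_tendsto_0[OF this(2-4)]]
  show ?thesis unfolding \<sigma>_def .
qed

end

theorem theorem3p11:
  fixes M :: "'a measure" and \<rho> :: "'a \<Rightarrow> real"
    and c \<mu> a b :: real and cbar \<mu>bar :: "nat \<Rightarrow> real"
    and Lc L\<mu> :: "real \<Rightarrow> real" and d :: "nat \<Rightarrow> real" and Kbar :: ereal
  assumes "prob_space M"
    and "\<rho> \<in> borel_measurable M"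
    and "\<forall>x\<in>space M. \<rho> x > 0"
    and "integrable M \<rho>" and "(\<integral>x. \<rho> x \<partial>M) = 1"
    and "c > 0" and "\<mu> > 0"
    and "\<forall>k. cbar k > 0" and "\<forall>k. \<mu>bar k > 0"
    and "slowly_varying Lc" and "slowly_varying L\<mu>"
    and "cbar \<sim>[sequentially] (\<lambda>k. Lc (real k) * real k powr a)"
    and "\<mu>bar \<sim>[sequentially] (\<lambda>k. L\<mu> (real k) * real k powr b)"
    and "(\<lambda>k. ereal (\<mu>bar k / cbar k)) \<longlonglongrightarrow> Kbar"
    and "d 0 \<ge> 0"
    and "\<forall>k. d (Suc k) = (\<integral>x. (c ^ k * cbar k) * ((\<mu> ^ k * \<mu>bar k) * \<rho> x + d k)
                 / ((c ^ k * cbar k) + ((\<mu> ^ k * \<mu>bar k) * \<rho> x + d k)) \<partial>M)"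
  shows
    "((c < \<mu> \<or> (c = \<mu> \<and> Kbar = \<infinity>)) \<longrightarrow>
        (\<lambda>k. d k / (c ^ k * cbar k)) \<longlonglongrightarrow> 1 / c)
   \<and> ((c = \<mu> \<and> 0 < Kbar \<and> Kbar < \<infinity>) \<longrightarrow>
        (\<exists>Mb. 0 < Mb \<and> Mb < 1 \<and>
           Mb = (\<integral>x. (c * real_of_ereal Kbar * \<rho> x + Mb)
                     / (c + (c * real_of_ereal Kbar * \<rho> x + Mb)) \<partial>M) \<and>
           (\<forall>M'. 0 < M' \<and> M' < 1 \<and>
              M' = (\<integral>x. (c * real_of_ereal Kbar * \<rho> x + M')
                     / (c + (c * real_of_ereal Kbar * \<rho> x + M')) \<partial>M) \<longrightarrow> M' = Mb) \<and>
           (\<lambda>k. d k / (c ^ k * cbar k)) \<longlonglongrightarrow> Mb / c))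
   \<and> ((c = \<mu> \<and> c < 1 \<and> Kbar = 0) \<longrightarrow>
        (\<lambda>k. d k / (c ^ k * cbar k)) \<longlonglongrightarrow> (1 - c) / c)
   \<and> ((c = \<mu> \<and> c > 1 \<and> Kbar = 0 \<and> \<not> summable (\<lambda>k. \<mu>bar k / cbar k)) \<longrightarrow>
        (\<lambda>k. d k / (\<mu> ^ k * \<mu>bar k)) \<longlonglongrightarrow> 1 / (\<mu> - 1))
   \<and> (((1 > c \<and> c > \<mu> \<and> Kbar = 0) \<or> (c = 1 \<and> c > \<mu> \<and> Kbar = 0 \<and> a < 1)) \<longrightarrow>
        (\<lambda>k. (\<Sum>l<k. 1 / (c ^ l * cbar l)) * d k) \<longlonglongrightarrow> 1)"
proof -
  interpret regularly_varying_recursion M \<rho> c \<mu> a b cbar \<mu>bar Lc L\<mu> d Kbar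
    by (rule regularly_varying_recursion.intro) (fact assms)+
  show ?thesis
    by (intro conjI impI; rule regime_A regime_B regime_C1 regime_C2 regime_C3; assumption)
qed

end
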